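(* Let $\alpha\ge1$, $S_0>0$, and let $\tilde u_0:[0,S_0]\to[0,\infty)$ be continuous and non-decreasing with $\tilde u_0(S_0)>0$. Let $u_0=\tilde u_0$ on $[0,S_0)$ and $u_0=0$ on $(S_0,\infty)$, $m_0(\rho)=\int_0^\rho u_0$, $M=m_0(S_0)$. Let $P_t(\rho_0)=\rho_0+\alpha m_0(\rho_0)\tilde u_0(\rho_0)^{\alpha-1}t$ for $\rho_0\in[0,S_0]$ (an increasing bijection of $[0,S_0]$ onto $[0,\bar S(t)]$), where $\bar S(t)=S_0+\alpha M\tilde u_0(S_0)^{\alpha-1}t$. Define $\tilde u(t,\rho)=\big(\tilde u_0(P_t^{-1}(\rho))^{-\alpha}+\alpha t\big)^{-1/\alpha}$ if $\rho\le\bar S(t)$ and $\tilde u_0(P_t^{-1}(\rho))>0$, and $\tilde u(t,\rho)=0$ otherwise. Let $S$ be a solution of $S'(t)=M\,\tilde u(t,S(t))^{\alpha-1}$, $S(0)=S_0$, and set $u(t,\rho)=\tilde u(t,\rho)$ for $\rho<S(t)$, $u(t,\rho)=0$ for $\rho>S(t)$. Then $S(t)\le\bar S(t)$ for all $t\ge0$, and $m(t,\rho)=\int_0^\rho u(t,\sigma)d\sigma$ is a viscosity solution of the mass problem with initial datum $m_0$.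
   Context: The mass problem is $m_t+(m_\rho)_+^\alpha m=0$ for $t,\rho>0$, $m(t,0)=0$, $m(0,\rho)=m_0(\rho)$. Fréchet superdifferential $D^+f(x)=\{p:\limsup_{y\to x}\frac{f(y)-f(x)-p\cdot(y-x)}{|y-x|}\le0\}$ and subdifferential $D^-f$ with $\liminf\ge0$. A continuous $m$ on $[0,\infty)^2$ is a viscosity subsolution if $p_1+(p_2)_+^\alpha m(t,\rho)\le0$ for all $(t,\rho)\in(0,\infty)^2$, $(p_1,p_2)\in D^+m(t,\rho)$, with $m(0,\cdot)\le m_0$, $m(t,0)\le0$; a supersolution if $p_1+(p_2)_+^\alpha m\ge0$ for all $(p_1,p_2)\in D^-m(t,\rho)$, with $m(0,\cdot)\ge m_0$, $m(t,0)\ge0$; a viscosity solution if both. *)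

theory Defs
  imports "HOL-Analysis.Analysis"
begin

definition pair_inner :: "real \<times> real \<Rightarrow> real \<times> real \<Rightarrow> real" where
  "pair_inner p v = fst p * fst v + snd p * snd v"

definition frechet_superdiff :: "(real \<times> real \<Rightarrow> real) \<Rightarrow> real \<times> real \<Rightarrow> (real \<times> real) set" where
  "frechet_superdiff f x = {p. Limsup (at x)
      (\<lambda>y. ereal ((f y - f x - pair_inner p (y - x)) / norm (y - x))) \<le> 0}"

definition frechet_subdiff :: "(real \<times> real \<Rightarrow> real) \<Rightarrow> real \<times> real \<Rightarrow> (real \<times> real) set" where
  "frechet_subdiff f x = {p. Liminf (at x)
      (\<lambda>y. ereal ((f y - f x - pair_inner p (y - x)) / norm (y - x))) \<ge> 0}"

text \<open>Viscosity sub/super-solutions of m_t + (m_rho)_+^alpha m = 0 with data m(0,.) = m0, m(t,0) = 0.\<close>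
definition visc_subsol :: "real \<Rightarrow> (real \<Rightarrow> real) \<Rightarrow> (real \<times> real \<Rightarrow> real) \<Rightarrow> bool" where
  "visc_subsol \<alpha> m0 m \<longleftrightarrow>
     continuous_on ({0..} \<times> {0..}) m \<and>
     (\<forall>t>0. \<forall>\<rho>>0. \<forall>p\<in>frechet_superdiff m (t, \<rho>).
         fst p + (max (snd p) 0) powr \<alpha> * m (t, \<rho>) \<le> 0) \<and>
     (\<forall>\<rho>\<ge>0. m (0, \<rho>) \<le> m0 \<rho>) \<and>
     (\<forall>t\<ge>0. m (t, 0) \<le> 0)"

definition visc_supersol :: "real \<Rightarrow> (real \<Rightarrow> real) \<Rightarrow> (real \<times> real \<Rightarrow> real) \<Rightarrow> bool" where
  "visc_supersol \<alpha> m0 m \<longleftrightarrow>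
     continuous_on ({0..} \<times> {0..}) m \<and>
     (\<forall>t>0. \<forall>\<rho>>0. \<forall>p\<in>frechet_subdiff m (t, \<rho>).
         fst p + (max (snd p) 0) powr \<alpha> * m (t, \<rho>) \<ge> 0) \<and>
     (\<forall>\<rho>\<ge>0. m (0, \<rho>) \<ge> m0 \<rho>) \<and>
     (\<forall>t\<ge>0. m (t, 0) \<ge> 0)"

definition visc_sol :: "real \<Rightarrow> (real \<Rightarrow> real) \<Rightarrow> (real \<times> real \<Rightarrow> real) \<Rightarrow> bool" where
  "visc_sol \<alpha> m0 m \<longleftrightarrow> visc_subsol \<alpha> m0 m \<and> visc_supersol \<alpha> m0 m"

text \<open>Real power of a nonnegative base with the convention x^0 = 1 (also for x = 0).\<close>
definition pw :: "real \<Rightarrow> real \<Rightarrow> real" where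
  "pw x a = (if a = 0 then 1 else x powr a)"

end

(*
  Along the characteristic starting at s, char_pos t s = s + alpha t m0(s) u0(s)^(alpha-1) (the paper's
  P_t), the density obeys u' = -u^(alpha+1), so it equals decay t (u0 s) = (u0(s)^(-alpha) + alpha t)^(-1/alpha),
  and the mass to the left of the characteristic is char_mass t s = m0(s) (1 + alpha t u0(s)^alpha)^((alpha-1)/alpha).
  Comparing the increments of char_mass and char_pos shows that m_sol t rho = integral of u_sol t over
  [0, rho] equals char_mass at the foot of the characteristic through (t, rho); differentiating along
  characteristics then shows that m_sol is a C^1 solution of m_t + (m_rho)^alpha m = 0 with m_rho >= 0.
  Along the front, d/dt (m_sol t (S t) - M)^2 = -2 u^alpha (m_sol t (S t) - M)^2, so the front carries
  the whole mass M, stays behind char_pos t S0, and the truncated profile has mass min (m_sol, M).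
  Finally, the minimum of a C^1 solution with a nonnegative constant is a viscosity solution: a Frechet
  semidifferential is tested against one-sided directional derivatives, which at the kink
  m_sol = M are min (D m_sol, 0).
*)

theory Submission
  imports Defs
begin

lemma pw_nonneg: "pw x a \<ge> 0"
  unfolding pw_def by simp

lemma pw_mono:
  assumes "1 \<le> \<alpha>" "0 \<le> x" "x \<le> y"
  shows "pw x (\<alpha> - 1) \<le> pw y (\<alpha> - 1)"
  using assms by (cases "\<alpha> = 1") (auto simp: pw_def powr_mono2)

lemma mult_pw_eq_powr:
  assumes "0 \<le> v"
  shows "v * pw v (\<alpha> - 1) = v powr \<alpha>"
  using assms powr_mult_base[of v "\<alpha> - 1"] by (cases "\<alpha> = 1") (auto simp: pw_def)

lemma continuous_on_pw:
  assumes "1 \<le> \<alpha>" "continuous_on A f" "\<And>x. x \<in> A \<Longrightarrow> 0 \<le> f x"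
  shows "continuous_on A (\<lambda>x. pw (f x) (\<alpha> - 1))"
proof (cases "\<alpha> = 1")
  case False
  with assms show ?thesis
    unfolding pw_def by (auto intro!: continuous_on_powr')
qed (simp add: pw_def)

lemma DERIV_mvt_between:
  fixes f :: "real \<Rightarrow> real"
  assumes "\<And>x. min a b \<le> x \<Longrightarrow> x \<le> max a b \<Longrightarrow> (f has_real_derivative f' x) (at x)"
  obtains \<xi> where "min a b \<le> \<xi>" "\<xi> \<le> max a b" "f b - f a = f' \<xi> * (b - a)"
proof (cases a b rule: linorder_cases)
  case less
  then obtain z where "a < z" "z < b" "f b - f a = (b - a) * f' z"
    using MVT2[of a b f f'] assms by auto
  then show ?thesis using that[of z] less by (simp add: mult.commute)
next
  case greater
  then obtain z where "b < z" "z < a" "f a - f b = (a - b) * f' z"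
    using MVT2[of b a f f'] assms by auto
  then show ?thesis using that[of z] greater by (simp add: algebra_simps)
qed (use that in simp)

lemma DERIV_mvt_between_family:
  fixes g u :: "real \<Rightarrow> real \<Rightarrow> real" and b :: "real \<Rightarrow> real"
  assumes g: "\<And>t \<rho>. 0 < t \<Longrightarrow> 0 < \<rho> \<Longrightarrow> (g t has_real_derivative u t \<rho>) (at \<rho>)" and \<rho>0: "0 < \<rho>0"
  shows "\<exists>\<xi>. \<forall>t. 0 < t \<longrightarrow> 0 < b t \<longrightarrow> min \<rho>0 (b t) \<le> \<xi> t \<and> \<xi> t \<le> max \<rho>0 (b t) \<and>
      g t (b t) - g t \<rho>0 = u t (\<xi> t) * (b t - \<rho>0)"
proof (rule choice, rule allI)
  fix t
  show "\<exists>x. 0 < t \<longrightarrow> 0 < b t \<longrightarrow> min \<rho>0 (b t) \<le> x \<and> x \<le> max \<rho>0 (b t) \<and>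
      g t (b t) - g t \<rho>0 = u t x * (b t - \<rho>0)"
  proof (cases "0 < t \<and> 0 < b t")
    case True
    then have "(g t has_real_derivative u t x) (at x)" if "min \<rho>0 (b t) \<le> x" for x
      using that \<rho>0 by (intro g) auto
    then obtain x where "min \<rho>0 (b t) \<le> x" "x \<le> max \<rho>0 (b t)" "g t (b t) - g t \<rho>0 = u t x * (b t - \<rho>0)"
      using DERIV_mvt_between[of \<rho>0 "b t" "g t" "u t"] by blast
    then show ?thesis by blast
  qed blast
qed

lemma DERIV_increment_along_curve:
  fixes g u :: "real \<Rightarrow> real \<Rightarrow> real" and b :: "real \<Rightarrow> real"
  assumes g: "\<And>t \<rho>. 0 < t \<Longrightarrow> 0 < \<rho> \<Longrightarrow> (g t has_real_derivative u t \<rho>) (at \<rho>)"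
    and u: "isCont (\<lambda>(t, \<rho>). u t \<rho>) (t0, \<rho>0)"
    and b: "(b has_real_derivative b') (at t0)" and b0: "b t0 = \<rho>0"
    and t0: "0 < t0" and \<rho>0: "0 < \<rho>0"
  shows "((\<lambda>t. g t (b t) - g t \<rho>0) has_real_derivative u t0 \<rho>0 * b') (at t0)"
proof -
  have b_lim: "(b \<longlongrightarrow> \<rho>0) (at t0)"
    using DERIV_isCont[OF b] b0 by (simp add: isCont_def)
  have pos: "eventually (\<lambda>t. 0 < t \<and> 0 < b t) (at t0)"
    using order_tendstoD(1)[OF tendsto_ident_at t0] order_tendstoD(1)[OF b_lim \<rho>0]
    by eventually_elim simp
  have "\<exists>\<xi>. \<forall>t. 0 < t \<longrightarrow> 0 < b t \<longrightarrow> min \<rho>0 (b t) \<le> \<xi> t \<and> \<xi> t \<le> max \<rho>0 (b t) \<and>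
      g t (b t) - g t \<rho>0 = u t (\<xi> t) * (b t - \<rho>0)"
    by (rule DERIV_mvt_between_family[OF _ \<rho>0]) (rule g)
  then obtain \<xi> where \<xi>: "\<forall>t. 0 < t \<longrightarrow> 0 < b t \<longrightarrow> min \<rho>0 (b t) \<le> \<xi> t \<and> \<xi> t \<le> max \<rho>0 (b t) \<and>
      g t (b t) - g t \<rho>0 = u t (\<xi> t) * (b t - \<rho>0)" ..
  have "(\<xi> \<longlongrightarrow> \<rho>0) (at t0)"
  proof (rule tendsto_sandwich[where f = "\<lambda>t. min \<rho>0 (b t)" and h = "\<lambda>t. max \<rho>0 (b t)"])
    show "eventually (\<lambda>t. min \<rho>0 (b t) \<le> \<xi> t) (at t0)" "eventually (\<lambda>t. \<xi> t \<le> max \<rho>0 (b t)) (at t0)"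
      using pos by (eventually_elim, simp add: \<xi>)+
    show "((\<lambda>t. min \<rho>0 (b t)) \<longlongrightarrow> \<rho>0) (at t0)"
      using tendsto_min[OF tendsto_const b_lim, of \<rho>0] by simp
    show "((\<lambda>t. max \<rho>0 (b t)) \<longlongrightarrow> \<rho>0) (at t0)"
      using tendsto_max[OF tendsto_const b_lim, of \<rho>0] by simp
  qed
  then have "((\<lambda>t. (t, \<xi> t)) \<longlongrightarrow> (t0, \<rho>0)) (at t0)"
    by (intro tendsto_Pair tendsto_ident_at)
  from isCont_tendsto_compose[OF u this]
  have "((\<lambda>t. u t (\<xi> t)) \<longlongrightarrow> u t0 \<rho>0) (at t0)" by simp
  moreover have "((\<lambda>t. (b t - b t0) / (t - t0)) \<longlongrightarrow> b') (at t0)"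
    using b by (simp add: has_field_derivative_iff)
  ultimately have "((\<lambda>t. u t (\<xi> t) * ((b t - b t0) / (t - t0))) \<longlongrightarrow> u t0 \<rho>0 * b') (at t0)"
    by (rule tendsto_mult)
  moreover have "eventually (\<lambda>t. u t (\<xi> t) * ((b t - b t0) / (t - t0))
      = ((g t (b t) - g t \<rho>0) - (g t0 (b t0) - g t0 \<rho>0)) / (t - t0)) (at t0)"
    using pos by eventually_elim (simp add: \<xi> b0)
  ultimately show ?thesis
    unfolding has_field_derivative_iff by (rule Lim_transform_eventually)
qed

lemma continuous_on_slice:
  assumes f: "continuous_on (A \<times> B) (\<lambda>(t, \<rho>). f t \<rho>)" and t: "t \<in> A"
  shows "continuous_on B (f t)"
proof -
  have c: "continuous_on B (\<lambda>r. (t, r))" by (intro continuous_intros)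
  have s: "(\<lambda>r. (t, r)) ` B \<subseteq> A \<times> B" using t by auto
  show ?thesis using continuous_on_compose2[OF f c s] by simp
qed

lemma DERIV_within_nonneg_imp_le:
  fixes f :: "real \<Rightarrow> real"
  assumes f: "\<And>t. 0 \<le> t \<Longrightarrow> (f has_real_derivative f' t) (at t within {0..})"
    and nonneg: "\<And>t. 0 \<le> t \<Longrightarrow> 0 \<le> f' t" and t: "0 \<le> t"
  shows "f 0 \<le> f t"
proof (rule DERIV_nonneg_imp_increasing_open[OF t])
  have "continuous_on {0..} f"
    unfolding continuous_on_eq_continuous_within using f by (auto intro: DERIV_continuous)
  then show "continuous_on {0..t} f" by (rule continuous_on_subset) auto
  fix x :: real assume "0 < x"
  then show "\<exists>y. (f has_real_derivative y) (at x) \<and> 0 \<le> y"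
    using f[of x] nonneg[of x] at_within_interior[of x "{0..}"] by auto
qed

section \<open>Semidifferentials of the minimum of a \<open>C\<^sup>1\<close> function and a constant\<close>

definition ray_derivative :: "('a::real_normed_vector \<Rightarrow> real) \<Rightarrow> 'a \<Rightarrow> 'a \<Rightarrow> real \<Rightarrow> bool" where
  "ray_derivative \<phi> x v L \<longleftrightarrow> ((\<lambda>h. (\<phi> (x + h *\<^sub>R v) - \<phi> x) / h) \<longlongrightarrow> L) (at_right 0)"

lemma ray_derivative_zero: "ray_derivative \<phi> x 0 L \<Longrightarrow> L = 0"
  unfolding ray_derivative_def by (simp add: tendsto_const_iff)

lemma filterlim_ray_at:
  fixes x v :: "'a::real_normed_vector"
  assumes "v \<noteq> 0"
  shows "filterlim (\<lambda>h. x + h *\<^sub>R v) (at x) (at_right 0)"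
proof (rule filterlim_atI)
  have "((\<lambda>h. x + h *\<^sub>R v) \<longlongrightarrow> x + 0 *\<^sub>R v) (at_right 0)"
    by (intro tendsto_intros)
  then show "((\<lambda>h. x + h *\<^sub>R v) \<longlongrightarrow> x) (at_right 0)" by simp
  show "eventually (\<lambda>h. x + h *\<^sub>R v \<noteq> x) (at_right (0::real))"
    using assms by (auto simp: eventually_at_right_less[THEN eventually_mono] eventually_at_filter)
qed

lemma pair_inner_scaleR_right: "pair_inner p (h *\<^sub>R v) = h * pair_inner p v"
  unfolding pair_inner_def by (simp add: algebra_simps)

lemma ray_derivative_le_frechet_superdiff:
  assumes p: "p \<in> frechet_superdiff \<phi> x" and L: "ray_derivative \<phi> x v L"
  shows "L \<le> pair_inner p v"
proof (cases "v = 0")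
  case True
  then show ?thesis using ray_derivative_zero[of \<phi> x L] L by (simp add: pair_inner_def)
next
  case False
  then have n: "norm v > 0" by simp
  show ?thesis
  proof (rule field_le_epsilon)
    fix e :: real assume e: "0 < e"
    have "Limsup (at x) (\<lambda>y. ereal ((\<phi> y - \<phi> x - pair_inner p (y - x)) / norm (y - x))) < ereal (e / norm v)"
      using p e n unfolding frechet_superdiff_def by (auto intro: le_less_trans)
    then have "eventually (\<lambda>y. (\<phi> y - \<phi> x - pair_inner p (y - x)) / norm (y - x) < e / norm v) (at x)"
      by (auto dest: Limsup_lessD)
    then have "eventually (\<lambda>h. (\<phi> (x + h *\<^sub>R v) - \<phi> x - pair_inner p (h *\<^sub>R v)) / norm (h *\<^sub>R v)
        < e / norm v) (at_right 0)"
      using eventually_compose_filterlim[OF _ filterlim_ray_at[OF False]] by fastforce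
    then have "eventually (\<lambda>h. (\<phi> (x + h *\<^sub>R v) - \<phi> x) / h \<le> pair_inner p v + e) (at_right 0)"
      using eventually_at_right_less[of 0]
    proof eventually_elim
      case (elim h)
      then have "(\<phi> (x + h *\<^sub>R v) - \<phi> x - h * pair_inner p v) / (h * norm v) < e / norm v"
        by (simp add: pair_inner_scaleR_right)
      then have "\<phi> (x + h *\<^sub>R v) - \<phi> x - h * pair_inner p v < e / norm v * (h * norm v)"
        using elim n by (simp add: divide_less_eq)
      then show ?case using elim n by (simp add: field_simps)
    qed
    then show "L \<le> pair_inner p v + e"
      using tendsto_upperbound[OF L[unfolded ray_derivative_def]] by simp
  qed
qed

lemma frechet_subdiff_iff_superdiff_uminus:
  "p \<in> frechet_subdiff \<phi> x \<longleftrightarrow> - p \<in> frechet_superdiff (\<lambda>y. - \<phi> y) x"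
proof -
  have "(\<lambda>y. ereal ((- \<phi> y - - \<phi> x - pair_inner (- p) (y - x)) / norm (y - x)))
      = (\<lambda>y. - ereal ((\<phi> y - \<phi> x - pair_inner p (y - x)) / norm (y - x)))"
    by (simp add: fun_eq_iff pair_inner_def minus_divide_left)
  then show ?thesis
    unfolding frechet_subdiff_def frechet_superdiff_def mem_Collect_eq
    by (simp only: ereal_Limsup_uminus) (auto simp: ereal_uminus_le_reorder)
qed

lemma frechet_subdiff_le_ray_derivative:
  assumes p: "p \<in> frechet_subdiff \<phi> x" and L: "ray_derivative \<phi> x v L"
  shows "pair_inner p v \<le> L"
proof -
  have "ray_derivative (\<lambda>y. - \<phi> y) x v (- L)"
    using tendsto_minus[OF L[unfolded ray_derivative_def]]
    unfolding ray_derivative_def by (simp add: minus_divide_left)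
  from ray_derivative_le_frechet_superdiff[OF p[unfolded frechet_subdiff_iff_superdiff_uminus] this]
  show ?thesis by (simp add: pair_inner_def)
qed

lemma has_derivative_imp_ray_derivative:
  assumes f: "(f has_derivative f') (at x)"
  shows "ray_derivative f x v (f' v)"
proof -
  have ray: "((\<lambda>h. x + h *\<^sub>R v) has_derivative (\<lambda>h. h *\<^sub>R v)) (at 0)"
    by (auto intro!: derivative_eq_intros)
  have "((\<lambda>h. f (x + h *\<^sub>R v)) has_derivative (\<lambda>h. f' (h *\<^sub>R v))) (at 0)"
    using has_derivative_compose[OF ray] f by simp
  moreover have "(\<lambda>h. f' (h *\<^sub>R v)) = (*) (f' v)"
    using linear_scale[OF bounded_linear.linear[OF has_derivative_bounded_linear[OF f]]]
    by (auto simp: mult.commute)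
  ultimately have "((\<lambda>h. f (x + h *\<^sub>R v)) has_real_derivative f' v) (at 0)"
    by (simp add: has_field_derivative_def)
  then have "((\<lambda>h. (f (x + h *\<^sub>R v) - f x) / h) \<longlongrightarrow> f' v) (at 0)"
    by (simp add: DERIV_def)
  then show ?thesis
    unfolding ray_derivative_def by (rule tendsto_mono[OF at_le, rotated]) simp
qed

(* The right derivative at 0 of h \<mapsto> min (a + h * d) c. *)
definition min_slope :: "real \<Rightarrow> real \<Rightarrow> real \<Rightarrow> real" where
  "min_slope a c d = (if a < c then d else if c < a then 0 else min d 0)"

lemma ray_derivative_min_const:
  fixes f \<phi> :: "'a::real_normed_vector \<Rightarrow> real"
  assumes f: "(f has_derivative f') (at x)"
    and near: "eventually (\<lambda>y. \<phi> y = min (f y) c) (nhds x)"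
  shows "ray_derivative \<phi> x v (min_slope (f x) c (f' v))"
proof -
  define q where "q h = (f (x + h *\<^sub>R v) - f x) / h" for h
  have q: "(q \<longlongrightarrow> f' v) (at_right 0)"
    using has_derivative_imp_ray_derivative[OF f] unfolding ray_derivative_def q_def .
  have ray: "((\<lambda>h. x + h *\<^sub>R v) \<longlongrightarrow> x) (at_right 0)"
    by (auto intro!: tendsto_eq_intros)
  have f_ray: "((\<lambda>h. f (x + h *\<^sub>R v)) \<longlongrightarrow> f x) (at_right 0)"
    using isCont_tendsto_compose[OF has_derivative_continuous[OF f] ray] .
  have \<phi>_ray: "eventually (\<lambda>h. \<phi> (x + h *\<^sub>R v) = min (f (x + h *\<^sub>R v)) c) (at_right 0)"
    using eventually_compose_filterlim[OF near ray] .
  have \<phi>x: "\<phi> x = min (f x) c"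
    using eventually_nhds_x_imp_x[OF near] .
  consider "f x < c" | "c < f x" | "f x = c" by linarith
  then show ?thesis
  proof cases
    case 1
    have "eventually (\<lambda>h. (\<phi> (x + h *\<^sub>R v) - \<phi> x) / h = q h) (at_right 0)"
      using \<phi>_ray order_tendstoD(2)[OF f_ray 1] by eventually_elim (simp add: q_def \<phi>x 1)
    from tendsto_cong[THEN iffD2, OF this q]
    show ?thesis using 1 unfolding ray_derivative_def min_slope_def by simp
  next
    case 2
    have "eventually (\<lambda>h. (\<phi> (x + h *\<^sub>R v) - \<phi> x) / h = 0) (at_right 0)"
      using \<phi>_ray order_tendstoD(1)[OF f_ray 2] by eventually_elim (simp add: \<phi>x 2)
    from tendsto_cong[THEN iffD2, OF this tendsto_const]
    show ?thesis using 2 unfolding ray_derivative_def min_slope_def by simp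
  next
    case 3
    have "eventually (\<lambda>h. (\<phi> (x + h *\<^sub>R v) - \<phi> x) / h = min (q h) 0) (at_right 0)"
      using \<phi>_ray eventually_at_right_less[of 0]
      by eventually_elim (auto simp: q_def \<phi>x 3 min_def divide_le_0_iff)
    from tendsto_cong[THEN iffD2, OF this tendsto_min[OF q tendsto_const]]
    show ?thesis using 3 unfolding ray_derivative_def min_slope_def by simp
  qed
qed

lemma kink_slopes_imp_hamiltonian_nonpos:
  fixes p1 p2 g1 g2 F :: real
  assumes slope: "\<And>a b. min (g1 * a + g2 * b) 0 \<le> p1 * a + p2 * b"
    and eq: "g1 = - (g2 powr \<alpha>) * F" and g2: "g2 \<ge> 0" and F: "F \<ge> 0" and \<alpha>: "\<alpha> \<ge> 1"
  shows "p1 + (max p2 0) powr \<alpha> * F \<le> 0"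
proof -
  have p2: "0 \<le> p2" "p2 \<le> g2"
    using slope[of 0 1] slope[of 0 "-1"] g2 by auto
  show ?thesis
  proof (cases "g2 = 0")
    case True
    then have "p1 = 0"
      using slope[of 1 0] slope[of "-1" 0] eq \<alpha> by auto
    then show ?thesis using p2 True \<alpha> by simp
  next
    case False
    txt \<open>Along the direction \<open>(g2, -g1)\<close>, tangent to the level set of \<open>f\<close>, the slope vanishes
      from both sides, so \<open>p\<close> is parallel to the gradient of \<open>f\<close>.\<close>
    have "p1 * g2 = p2 * g1"
      using slope[of g2 "-g1"] slope[of "-g2" g1] by (simp add: algebra_simps)
    then have "p1 * g2 = (- p2 * g2 powr (\<alpha> - 1) * F) * g2"
      using eq powr_mult_base[of g2 "\<alpha> - 1"] g2 by (simp add: algebra_simps)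
    then have p1: "p1 = - p2 * g2 powr (\<alpha> - 1) * F"
      using False by (metis mult_right_cancel)
    have "p2 * p2 powr (\<alpha> - 1) \<le> p2 * g2 powr (\<alpha> - 1)"
      using p2 \<alpha> by (intro mult_left_mono powr_mono2) auto
    then have "(p2 powr \<alpha> - p2 * g2 powr (\<alpha> - 1)) * F \<le> 0"
      using powr_mult_base[of p2 "\<alpha> - 1"] p2 F by (simp add: mult_nonpos_nonneg)
    then show ?thesis using p1 p2 by (simp add: algebra_simps)
  qed
qed

lemma superdiff_min_classical_solution:
  fixes \<phi> f :: "real \<times> real \<Rightarrow> real"
  assumes f: "(f has_derivative (\<lambda>h. g1 * fst h + g2 * snd h)) (at x)"
    and near: "eventually (\<lambda>y. \<phi> y = min (f y) c) (nhds x)"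
    and eq: "g1 = - (g2 powr \<alpha>) * f x" and g2: "g2 \<ge> 0" and c: "c \<ge> 0" and \<alpha>: "\<alpha> \<ge> 1"
    and p: "p \<in> frechet_superdiff \<phi> x"
  shows "fst p + (max (snd p) 0) powr \<alpha> * \<phi> x \<le> 0"
proof -
  obtain p1 p2 where pp: "p = (p1, p2)" by (cases p)
  have slope: "min_slope (f x) c (g1 * a + g2 * b) \<le> p1 * a + p2 * b" for a b
    using ray_derivative_le_frechet_superdiff[OF p ray_derivative_min_const[OF f near, of "(a, b)"]]
    by (simp add: pp pair_inner_def)
  have \<phi>x: "\<phi> x = min (f x) c"
    using eventually_nhds_x_imp_x[OF near] .
  consider "f x < c" | "c < f x" | "f x = c" by linarith
  then show ?thesis
  proof cases
    case 1
    have "p1 = g1" "p2 = g2"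
      using slope[of 1 0] slope[of "-1" 0] slope[of 0 1] slope[of 0 "-1"] 1
      by (auto simp: min_slope_def)
    then show ?thesis using pp \<phi>x 1 eq g2 by simp
  next
    case 2
    have "p1 = 0" "p2 = 0"
      using slope[of 1 0] slope[of "-1" 0] slope[of 0 1] slope[of 0 "-1"] 2
      by (auto simp: min_slope_def)
    then show ?thesis using pp by simp
  next
    case 3
    have "min (g1 * a + g2 * b) 0 \<le> p1 * a + p2 * b" for a b
      using slope[of a b] 3 by (simp add: min_slope_def)
    from kink_slopes_imp_hamiltonian_nonpos[OF this eq g2 _ \<alpha>]
    show ?thesis using pp \<phi>x 3 c by simp
  qed
qed

lemma subdiff_min_classical_solution:
  fixes \<phi> f :: "real \<times> real \<Rightarrow> real"
  assumes f: "(f has_derivative (\<lambda>h. g1 * fst h + g2 * snd h)) (at x)"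
    and near: "eventually (\<lambda>y. \<phi> y = min (f y) c) (nhds x)"
    and eq: "g1 = - (g2 powr \<alpha>) * f x" and g2: "g2 \<ge> 0" and \<alpha>: "\<alpha> \<ge> 1"
    and p: "p \<in> frechet_subdiff \<phi> x"
  shows "fst p + (max (snd p) 0) powr \<alpha> * \<phi> x \<ge> 0"
proof -
  obtain p1 p2 where pp: "p = (p1, p2)" by (cases p)
  have slope: "p1 * a + p2 * b \<le> min_slope (f x) c (g1 * a + g2 * b)" for a b
    using frechet_subdiff_le_ray_derivative[OF p ray_derivative_min_const[OF f near, of "(a, b)"]]
    by (simp add: pp pair_inner_def)
  have \<phi>x: "\<phi> x = min (f x) c"
    using eventually_nhds_x_imp_x[OF near] .
  consider "f x < c" | "c < f x" | "f x = c" by linarith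
  then show ?thesis
  proof cases
    case 1
    have "p1 = g1" "p2 = g2"
      using slope[of 1 0] slope[of "-1" 0] slope[of 0 1] slope[of 0 "-1"] 1
      by (auto simp: min_slope_def)
    then show ?thesis using pp \<phi>x 1 eq g2 by simp
  next
    case 2
    have "p1 = 0" "p2 = 0"
      using slope[of 1 0] slope[of "-1" 0] slope[of 0 1] slope[of 0 "-1"] 2
      by (auto simp: min_slope_def)
    then show ?thesis using pp by simp
  next
    case 3
    have "p2 = 0" "g2 = 0"
      using slope[of 0 1] slope[of 0 "-1"] 3 g2 by (auto simp: min_slope_def)
    moreover have "p1 = 0"
      using slope[of 1 0] slope[of "-1" 0] 3 eq \<alpha> \<open>g2 = 0\<close> by (auto simp: min_slope_def)
    ultimately show ?thesis using pp by simp
  qed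
qed

section \<open>Characteristics\<close>

locale mass_problem =
  fixes \<alpha> S0 :: real and ut0 :: "real \<Rightarrow> real"
  assumes alpha_ge_1: "\<alpha> \<ge> 1" and S0_pos: "S0 > 0"
    and ut0_cont: "continuous_on {0..S0} ut0"
    and ut0_mono: "mono_on {0..S0} ut0"
    and ut0_nonneg: "\<And>\<rho>. \<rho> \<in> {0..S0} \<Longrightarrow> ut0 \<rho> \<ge> 0"
begin

lemma alpha_pos: "\<alpha> > 0"
  using alpha_ge_1 by simp

(* Beyond S0 the datum is continued by the constant ut0 S0: characteristics starting there never
   matter, but the continuation makes every char_pos t a bijection of [0, \<infinity>). *)
definition u_ext :: "real \<Rightarrow> real" where
  "u_ext x = ut0 (max 0 (min x S0))"

lemma continuous_on_u_ext: "continuous_on A u_ext"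
proof -
  have "continuous_on UNIV (\<lambda>x. max 0 (min x S0))" by (intro continuous_intros)
  moreover have "range (\<lambda>x. max 0 (min x S0)) \<subseteq> {0..S0}" using S0_pos by auto
  ultimately show ?thesis
    unfolding u_ext_def using continuous_on_compose2[OF ut0_cont] continuous_on_subset by blast
qed

lemma u_ext_mono: "x \<le> y \<Longrightarrow> u_ext x \<le> u_ext y"
  unfolding u_ext_def using S0_pos by (intro mono_onD[OF ut0_mono]) auto

lemma u_ext_nonneg: "u_ext x \<ge> 0"
  unfolding u_ext_def using S0_pos ut0_nonneg by auto

lemma u_ext_eq: "x \<in> {0..S0} \<Longrightarrow> u_ext x = ut0 x"
  unfolding u_ext_def by simp

definition mass0 :: "real \<Rightarrow> real" where
  "mass0 s = integral {0..s} u_ext"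

lemma mass0_0 [simp]: "mass0 0 = 0"
  unfolding mass0_def by simp

lemma mass0_has_derivative_within:
  assumes "0 \<le> s"
  shows "(mass0 has_real_derivative u_ext s) (at s within {0..})"
proof -
  have "(mass0 has_real_derivative u_ext s) (at s within {0..s+1})"
    unfolding mass0_def using assms by (intro integral_has_real_derivative continuous_on_u_ext) auto
  moreover have "at s within {0..s+1} = at s within {0..}"
    by (rule at_within_nhd[where S="{..<s+1}"]) auto
  ultimately show ?thesis by simp
qed

lemma mass0_has_derivative: "0 < s \<Longrightarrow> (mass0 has_real_derivative u_ext s) (at s)"
  using mass0_has_derivative_within[of s] at_within_interior[of s "{0..}"] by simp

lemma continuous_on_mass0: "continuous_on {0..} mass0"
  unfolding continuous_on_eq_continuous_within
  using mass0_has_derivative_within by (auto intro: DERIV_continuous)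

lemma mass0_mvt:
  assumes "0 \<le> s1" "s1 < s2"
  obtains \<sigma> where "s1 < \<sigma>" "\<sigma> < s2" "mass0 s2 - mass0 s1 = u_ext \<sigma> * (s2 - s1)"
proof -
  have "continuous_on {s1..s2} mass0"
    using continuous_on_subset[OF continuous_on_mass0] assms by auto
  moreover have "mass0 differentiable (at x)" if "s1 < x" "x < s2" for x
    using mass0_has_derivative[of x] that assms real_differentiable_def by auto
  ultimately obtain l \<sigma> where "s1 < \<sigma>" "\<sigma> < s2" "(mass0 has_real_derivative l) (at \<sigma>)"
      "mass0 s2 - mass0 s1 = (s2 - s1) * l"
    using MVT[OF assms(2)] by blast
  moreover have "l = u_ext \<sigma>"
    using DERIV_unique[OF \<open>(mass0 has_real_derivative l) (at \<sigma>)\<close> mass0_has_derivative] assms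
      \<open>s1 < \<sigma>\<close> by simp
  ultimately show ?thesis using that by (simp add: mult.commute)
qed

lemma mass0_mono: "0 \<le> s1 \<Longrightarrow> s1 \<le> s2 \<Longrightarrow> mass0 s1 \<le> mass0 s2"
  unfolding mass0_def
  by (intro integral_subset_le integrable_continuous_interval continuous_on_u_ext)
    (auto simp: u_ext_nonneg)

lemma mass0_nonneg: "0 \<le> s \<Longrightarrow> mass0 s \<ge> 0"
  using mass0_mono[of 0 s] by simp

lemma mass0_min: "0 \<le> \<rho> \<Longrightarrow> mass0 (min \<rho> S0) = min (mass0 \<rho>) (mass0 S0)"
  using mass0_mono[of \<rho> S0] mass0_mono[of S0 \<rho>] S0_pos by (auto simp: min_def)

definition char_speed :: "real \<Rightarrow> real" where
  "char_speed s = mass0 s * pw (u_ext s) (\<alpha> - 1)"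

definition char_pos :: "real \<Rightarrow> real \<Rightarrow> real" where
  "char_pos t s = s + \<alpha> * t * char_speed s"

lemma char_speed_nonneg: "0 \<le> s \<Longrightarrow> char_speed s \<ge> 0"
  unfolding char_speed_def by (simp add: mass0_nonneg pw_nonneg)

lemma char_speed_mono: "0 \<le> s1 \<Longrightarrow> s1 \<le> s2 \<Longrightarrow> char_speed s1 \<le> char_speed s2"
  unfolding char_speed_def using alpha_ge_1
  by (intro mult_mono mass0_mono pw_mono u_ext_mono u_ext_nonneg pw_nonneg mass0_nonneg) auto

lemma continuous_on_char_speed: "continuous_on {0..} char_speed"
  unfolding char_speed_def using alpha_ge_1
  by (intro continuous_intros continuous_on_mass0 continuous_on_pw continuous_on_u_ext)
    (auto simp: u_ext_nonneg)

lemma char_pos_0 [simp]: "char_pos t 0 = 0"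
  unfolding char_pos_def char_speed_def by simp

lemma char_pos_ge: "0 \<le> t \<Longrightarrow> 0 \<le> s \<Longrightarrow> s \<le> char_pos t s"
  unfolding char_pos_def using char_speed_nonneg[of s] alpha_pos by simp

lemma char_pos_strict_mono: "0 \<le> t \<Longrightarrow> strict_mono_on {0..} (char_pos t)"
  unfolding char_pos_def using char_speed_mono alpha_pos
  by (intro strict_mono_onI) (smt (verit, best) atLeast_iff mult_left_mono mult_nonneg_nonneg)

lemma char_pos_le_iff: "0 \<le> t \<Longrightarrow> 0 \<le> s1 \<Longrightarrow> 0 \<le> s2 \<Longrightarrow> char_pos t s1 \<le> char_pos t s2 \<longleftrightarrow> s1 \<le> s2"
  using strict_mono_on_less_eq[OF char_pos_strict_mono] by simp

lemma char_pos_less_iff: "0 \<le> t \<Longrightarrow> 0 \<le> s1 \<Longrightarrow> 0 \<le> s2 \<Longrightarrow> char_pos t s1 < char_pos t s2 \<longleftrightarrow> s1 < s2"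
  using strict_mono_on_less[OF char_pos_strict_mono] by simp

lemma char_pos_bij: assumes "0 \<le> t" shows "bij_betw (char_pos t) {0..} {0..}"
proof (rule bij_betw_imageI)
  show "inj_on (char_pos t) {0..}"
    using strict_mono_on_imp_inj_on[OF char_pos_strict_mono[OF assms]] .
  have "\<rho> \<in> char_pos t ` {0..}" if \<rho>: "0 \<le> \<rho>" for \<rho>
  proof -
    have "continuous_on {0..\<rho>} (char_pos t)"
      unfolding char_pos_def
      by (intro continuous_intros continuous_on_subset[OF continuous_on_char_speed]) auto
    then obtain s where "s \<in> {0..\<rho>}" "char_pos t s = \<rho>"
      using IVT'[of "char_pos t" 0 \<rho> \<rho>] char_pos_ge[OF assms \<rho>] \<rho> by auto
    then show ?thesis by force
  qed
  then show "char_pos t ` {0..} = {0..}"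
    using char_pos_ge[OF assms] by (force intro: order_trans)
qed

definition char_foot :: "real \<Rightarrow> real \<Rightarrow> real" where
  "char_foot t \<rho> = the_inv_into {0..} (char_pos t) \<rho>"

lemma char_foot_nonneg: "0 \<le> t \<Longrightarrow> 0 \<le> \<rho> \<Longrightarrow> 0 \<le> char_foot t \<rho>"
  unfolding char_foot_def
  using bij_betwE[OF bij_betw_the_inv_into[OF char_pos_bij]] by auto

lemma char_pos_foot: "0 \<le> t \<Longrightarrow> 0 \<le> \<rho> \<Longrightarrow> char_pos t (char_foot t \<rho>) = \<rho>"
  unfolding char_foot_def using f_the_inv_into_f_bij_betw[OF char_pos_bij] by auto

lemma char_foot_pos: "0 \<le> t \<Longrightarrow> 0 \<le> s \<Longrightarrow> char_foot t (char_pos t s) = s"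
  unfolding char_foot_def
  using the_inv_into_f_f[OF bij_betw_imp_inj_on[OF char_pos_bij]] by auto

lemma char_foot_le_iff: "0 \<le> t \<Longrightarrow> 0 \<le> \<rho> \<Longrightarrow> 0 \<le> s \<Longrightarrow> char_foot t \<rho> \<le> s \<longleftrightarrow> \<rho> \<le> char_pos t s"
  using char_pos_le_iff[of t "char_foot t \<rho>" s] by (simp add: char_foot_nonneg char_pos_foot)

lemma char_foot_less_iff: "0 \<le> t \<Longrightarrow> 0 \<le> \<rho> \<Longrightarrow> 0 \<le> s \<Longrightarrow> char_foot t \<rho> < s \<longleftrightarrow> \<rho> < char_pos t s"
  using char_pos_less_iff[of t "char_foot t \<rho>" s] by (simp add: char_foot_nonneg char_pos_foot)

lemma continuous_on_char_foot: "continuous_on ({0..} \<times> {0..}) (\<lambda>(t, \<rho>). char_foot t \<rho>)"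
  unfolding continuous_on_def
proof (rule ballI)
  fix x :: "real \<times> real" assume "x \<in> {0..} \<times> {0..}"
  then obtain t \<rho> where x: "x = (t, \<rho>)" and t: "0 \<le> t" and \<rho>: "0 \<le> \<rho>" by auto
  define F where "F = at (t, \<rho>) within {0..} \<times> {0..}"
  have in_D: "eventually (\<lambda>(t', \<rho>'). 0 \<le> t' \<and> 0 \<le> \<rho>') F"
    unfolding F_def eventually_at_filter by (rule always_eventually) auto
  have lim: "((\<lambda>(t', \<rho>'). char_pos t' s - \<rho>') \<longlongrightarrow> char_pos t s - \<rho>) F" for s
    unfolding F_def char_pos_def case_prod_unfold
    by (auto intro!: tendsto_eq_intros)
  have "((\<lambda>(t, \<rho>). char_foot t \<rho>) \<longlongrightarrow> char_foot t \<rho>) F"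
  proof (rule order_tendstoI)
    fix a assume a: "char_foot t \<rho> < a"
    then have "0 < char_pos t a - \<rho>"
      using char_foot_less_iff[OF t \<rho>, of a] char_foot_nonneg[OF t \<rho>] by simp
    from in_D order_tendstoD(1)[OF lim this]
    show "eventually (\<lambda>y. (\<lambda>(t, \<rho>). char_foot t \<rho>) y < a) F"
      by eventually_elim (use a char_foot_nonneg[OF t \<rho>] char_foot_less_iff in auto)
  next
    fix b assume b: "b < char_foot t \<rho>"
    show "eventually (\<lambda>y. b < (\<lambda>(t, \<rho>). char_foot t \<rho>) y) F"
    proof (cases "b < 0")
      case True
      from in_D show ?thesis
        by eventually_elim (use True char_foot_nonneg in \<open>fastforce simp: case_prod_unfold\<close>)
    next
      case False
      then have "char_pos t b - \<rho> < 0"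
        using b char_foot_le_iff[OF t \<rho>, of b] by simp
      from in_D order_tendstoD(2)[OF lim this] show ?thesis
      proof eventually_elim
        case (elim y)
        then show ?case
          using False char_foot_le_iff[of "fst y" "snd y" b] by (auto simp: case_prod_unfold)
      qed
    qed
  qed
  then show "((\<lambda>(t, \<rho>). char_foot t \<rho>) \<longlongrightarrow> (\<lambda>(t, \<rho>). char_foot t \<rho>) x) (at x within {0..} \<times> {0..})"
    unfolding x F_def by simp
qed

section \<open>Decay of the density and mass along characteristics\<close>

definition decay_base :: "real \<Rightarrow> real \<Rightarrow> real" where
  "decay_base t v = 1 + \<alpha> * t * v powr \<alpha>"

definition decay :: "real \<Rightarrow> real \<Rightarrow> real" where
  "decay t v = v * decay_base t v powr (- 1 / \<alpha>)"

definition stretch :: "real \<Rightarrow> real \<Rightarrow> real" where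
  "stretch t v = decay_base t v powr ((\<alpha> - 1) / \<alpha>)"

lemma decay_base_ge_1: "0 \<le> t \<Longrightarrow> 1 \<le> decay_base t v"
  unfolding decay_base_def using alpha_pos by simp

lemma continuous_on_decay_base_powr:
  assumes "continuous_on A f" "continuous_on A g" "\<And>x. x \<in> A \<Longrightarrow> 0 \<le> f x" "\<And>x. x \<in> A \<Longrightarrow> 0 \<le> g x"
  shows "continuous_on A (\<lambda>x. decay_base (f x) (g x) powr c)"
proof -
  have "continuous_on A (\<lambda>x. decay_base (f x) (g x))"
    unfolding decay_base_def using assms alpha_pos by (intro continuous_intros continuous_on_powr') auto
  moreover have "1 \<le> decay_base (f x) (g x)" if "x \<in> A" for x
    using decay_base_ge_1 assms(3) that by simp
  ultimately show ?thesis
    by (intro continuous_on_powr') (fastforce intro: continuous_on_const)+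
qed

lemma continuous_on_decay:
  assumes "continuous_on A f" "continuous_on A g" "\<And>x. x \<in> A \<Longrightarrow> 0 \<le> f x" "\<And>x. x \<in> A \<Longrightarrow> 0 \<le> g x"
  shows "continuous_on A (\<lambda>x. decay (f x) (g x))"
  unfolding decay_def using assms by (intro continuous_intros continuous_on_decay_base_powr)

lemma continuous_on_stretch:
  assumes "continuous_on A f" "continuous_on A g" "\<And>x. x \<in> A \<Longrightarrow> 0 \<le> f x" "\<And>x. x \<in> A \<Longrightarrow> 0 \<le> g x"
  shows "continuous_on A (\<lambda>x. stretch (f x) (g x))"
  unfolding stretch_def using assms by (rule continuous_on_decay_base_powr)

lemma decay_nonneg: "0 \<le> v \<Longrightarrow> 0 \<le> decay t v"
  unfolding decay_def by simp

lemma decay_0 [simp]: "decay t 0 = 0"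
  unfolding decay_def by simp

lemma decay_le: assumes "0 \<le> t" "0 \<le> v" shows "decay t v \<le> v"
proof -
  have "1 \<le> decay_base t v powr (1 / \<alpha>)"
    using decay_base_ge_1[OF assms(1)] alpha_pos by (intro ge_one_powr_ge_zero) auto
  then have "decay_base t v powr (- 1 / \<alpha>) \<le> 1"
    by (simp add: powr_minus_divide divide_le_eq_1)
  then show ?thesis
    unfolding decay_def using assms(2) by (simp add: mult_left_le)
qed

lemma decay_eq_powr:
  assumes v: "0 < v" and t: "0 \<le> t"
  shows "(v powr (- \<alpha>) + \<alpha> * t) powr (- 1 / \<alpha>) = decay t v"
proof -
  have "v powr (- \<alpha>) + \<alpha> * t = v powr (- \<alpha>) * decay_base t v"
    using v by (simp add: decay_base_def powr_minus algebra_simps)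
  then have "(v powr (- \<alpha>) + \<alpha> * t) powr (- 1 / \<alpha>)
      = v powr (- \<alpha> * (- 1 / \<alpha>)) * decay_base t v powr (- 1 / \<alpha>)"
    by (simp add: powr_mult powr_powr)
  then show ?thesis
    unfolding decay_def using alpha_pos v by simp
qed

lemma stretch_eq_mult:
  assumes "0 \<le> t"
  shows "stretch t v = decay_base t v * decay_base t v powr (- 1 / \<alpha>)"
proof -
  have "(\<alpha> - 1) / \<alpha> = 1 + (- 1 / \<alpha>)"
    using alpha_pos by (simp add: field_simps)
  then show ?thesis
    unfolding stretch_def using decay_base_ge_1[OF assms, of v] by (simp only: powr_add) simp
qed

lemma stretch_alpha_1: "\<alpha> = 1 \<Longrightarrow> 0 \<le> t \<Longrightarrow> stretch t v = 1"
  unfolding stretch_def using decay_base_ge_1[of t v] by auto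

lemma stretch_time_0 [simp]: "stretch 0 v = 1"
  unfolding stretch_def decay_base_def by simp

lemma decay_identity:
  assumes "0 \<le> t" "0 \<le> v"
  shows "v * (stretch t v - \<alpha> * t * decay t v * pw v (\<alpha> - 1)) = decay t v"
proof -
  have "v * (stretch t v - \<alpha> * t * decay t v * pw v (\<alpha> - 1))
      = v * decay_base t v powr (- 1 / \<alpha>) * (decay_base t v - \<alpha> * t * (v * pw v (\<alpha> - 1)))"
    unfolding stretch_eq_mult[OF assms(1)] decay_def by (simp add: algebra_simps)
  then show ?thesis
    unfolding mult_pw_eq_powr[OF assms(2)] decay_def by (simp add: decay_base_def)
qed

lemma decay_powr_mult_stretch:
  assumes "0 \<le> t" "0 \<le> v"
  shows "decay t v powr \<alpha> * stretch t v = pw v (\<alpha> - 1) * decay t v"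
proof -
  define B where "B = decay_base t v"
  have B: "B \<ge> 1" using decay_base_ge_1[OF assms(1)] B_def by simp
  have "decay t v powr \<alpha> = v powr \<alpha> * B powr (- 1 / \<alpha> * \<alpha>)"
    unfolding decay_def B_def[symmetric] using assms(2) by (simp add: powr_mult powr_powr)
  also have "\<dots> = v powr \<alpha> / B"
    using alpha_pos B by (simp add: powr_minus divide_inverse)
  finally have "decay t v powr \<alpha> * stretch t v = v powr \<alpha> * B powr (- 1 / \<alpha>)"
    unfolding stretch_eq_mult[OF assms(1)] B_def[symmetric] using B by simp
  then show ?thesis
    unfolding decay_def B_def[symmetric] mult_pw_eq_powr[OF assms(2), symmetric] by simp
qed

lemma stretch_has_derivative_time:
  assumes "0 \<le> t" "0 \<le> v"
  shows "((\<lambda>t. stretch t v) has_real_derivative (\<alpha> - 1) * pw v (\<alpha> - 1) * decay t v) (at t)"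
proof -
  have base: "((\<lambda>t. decay_base t v) has_real_derivative \<alpha> * v powr \<alpha>) (at t)"
    unfolding decay_base_def by (auto intro!: derivative_eq_intros)
  have D: "((\<lambda>t. stretch t v) has_real_derivative
      (\<alpha> - 1) / \<alpha> * decay_base t v powr ((\<alpha> - 1) / \<alpha> - of_nat 1) * (\<alpha> * v powr \<alpha>)) (at t)"
    unfolding stretch_def
    by (rule DERIV_fun_powr[OF base]) (use decay_base_ge_1[OF assms(1), of v] in linarith)
  have exp: "(\<alpha> - 1) / \<alpha> - of_nat 1 = - 1 / \<alpha>"
    using alpha_pos by (simp add: field_simps)
  have val: "(\<alpha> - 1) / \<alpha> * decay_base t v powr (- 1 / \<alpha>) * (\<alpha> * v powr \<alpha>)
      = (\<alpha> - 1) * pw v (\<alpha> - 1) * decay t v"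
    unfolding decay_def mult_pw_eq_powr[OF assms(2), symmetric] using alpha_pos by simp
  show ?thesis using D unfolding exp val .
qed

lemma stretch_has_derivative_space:
  assumes t: "0 \<le> t" and v: "0 < v"
  shows "((\<lambda>v. stretch t v) has_real_derivative \<alpha> * t * decay t v * ((\<alpha> - 1) * v powr (\<alpha> - 2))) (at v)"
proof -
  have base: "((\<lambda>v. decay_base t v) has_real_derivative \<alpha> * t * (\<alpha> * v powr (\<alpha> - 1))) (at v)"
    unfolding decay_base_def using v by (auto intro!: derivative_eq_intros)
  have D: "((\<lambda>v. stretch t v) has_real_derivative (\<alpha> - 1) / \<alpha> * decay_base t v powr ((\<alpha> - 1) / \<alpha> - of_nat 1)
      * (\<alpha> * t * (\<alpha> * v powr (\<alpha> - 1)))) (at v)"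
    unfolding stretch_def
    by (rule DERIV_fun_powr[OF base]) (use decay_base_ge_1[OF t, of v] in linarith)
  have exp: "(\<alpha> - 1) / \<alpha> - of_nat 1 = - 1 / \<alpha>"
    using alpha_pos by (simp add: field_simps)
  have vv: "v * v powr (\<alpha> - 2) = v powr (\<alpha> - 1)"
    using powr_mult_base[of v "\<alpha> - 2"] v by simp
  have val: "(\<alpha> - 1) / \<alpha> * decay_base t v powr (- 1 / \<alpha>) * (\<alpha> * t * (\<alpha> * v powr (\<alpha> - 1)))
      = \<alpha> * t * decay t v * ((\<alpha> - 1) * v powr (\<alpha> - 2))"
    unfolding decay_def vv[symmetric] using alpha_pos by (simp add: field_simps)
  show ?thesis using D unfolding exp val .
qed

lemma stretch_cauchy_mvt:
  assumes \<alpha>: "\<alpha> > 1" and t: "0 \<le> t" and v1: "0 \<le> v1" and v12: "v1 < v2"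
  obtains z where "v1 < z" "z < v2"
    "stretch t v2 - stretch t v1 = \<alpha> * t * decay t z * (pw v2 (\<alpha> - 1) - pw v1 (\<alpha> - 1))"
proof -
  txt \<open>Both functions are evaluated at \<open>\<bar>v\<bar>\<close> so that they are continuous also left of \<open>v1 = 0\<close>.\<close>
  define f where "f v = stretch t \<bar>v\<bar>" for v
  define g where "g v = \<bar>v\<bar> powr (\<alpha> - 1)" for v
  define g' where "g' v = (\<alpha> - 1) * v powr (\<alpha> - 2)" for v
  have "continuous_on UNIV f"
    unfolding f_def using t by (intro continuous_on_stretch continuous_intros) auto
  moreover have "continuous_on UNIV g"
    unfolding g_def using \<alpha> by (intro continuous_on_powr' continuous_intros) auto
  moreover have "(g has_real_derivative g' z) (at z)" if "0 < z" for z
  proof (rule has_field_derivative_transform_within_open[where S = "{0<..}"])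
    show "((\<lambda>v. v powr (\<alpha> - 1)) has_real_derivative g' z) (at z)"
      using has_real_derivative_powr[OF that, of "\<alpha> - 1"] by (simp add: g'_def)
  qed (use that in \<open>auto simp: g_def\<close>)
  moreover have "(f has_real_derivative \<alpha> * t * decay t z * g' z) (at z)" if "0 < z" for z
    using has_field_derivative_transform_within_open[OF stretch_has_derivative_space[OF t that],
        of "{0<..}" f] that
    by (auto simp: f_def g'_def)
  ultimately obtain z where z: "v1 < z" "z < v2"
      "(f v2 - f v1) * g' z = (g v2 - g v1) * (\<alpha> * t * decay t z * g' z)"
    using GMVT'[OF v12, of f g g' "\<lambda>z. \<alpha> * t * decay t z * g' z"] v1
    by (force simp: continuous_on_eq_continuous_at)
  then have "(f v2 - f v1) * g' z = ((g v2 - g v1) * (\<alpha> * t * decay t z)) * g' z"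
    by (simp add: algebra_simps)
  moreover have "g' z > 0"
    using \<alpha> z v1 by (simp add: g'_def)
  ultimately have "f v2 - f v1 = (g v2 - g v1) * (\<alpha> * t * decay t z)"
    by simp
  moreover have "f v2 = stretch t v2" "f v1 = stretch t v1"
    "g v2 = pw v2 (\<alpha> - 1)" "g v1 = pw v1 (\<alpha> - 1)"
    using v1 v12 \<alpha> by (auto simp: f_def g_def pw_def)
  ultimately show ?thesis
    using that z by (simp add: algebra_simps)
qed

definition char_mass :: "real \<Rightarrow> real \<Rightarrow> real" where
  "char_mass t s = mass0 s * stretch t (u_ext s)"

(* Over [s1, s2] the increment of char_mass minus c times that of char_pos splits into a part driven
   by the growth of mass0, small compared with s2 - s1, and a part driven by the growth of u_ext,
   small compared with the growth of pw (u_ext _) (alpha - 1); see char_mass_increment_bound. *)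
lemma char_mass_mass_term:
  fixes s :: real
  assumes t: "0 \<le> t" and e: "e > 0"
  defines "c \<equiv> decay t (u_ext s)"
  obtains \<delta> where "\<delta> > 0" "\<And>s1 s2. 0 \<le> s1 \<Longrightarrow> s1 < s2 \<Longrightarrow> s1 \<le> s \<Longrightarrow> s \<le> s2 \<Longrightarrow> s2 - s1 < \<delta> \<Longrightarrow>
      \<bar>(mass0 s2 - mass0 s1) * (stretch t (u_ext s2) - \<alpha> * t * c * pw (u_ext s2) (\<alpha> - 1))
        - c * (s2 - s1)\<bar> \<le> e * (s2 - s1)"
proof -
  define \<Psi> where "\<Psi> p = u_ext (fst p) * (stretch t (u_ext (snd p)) - \<alpha> * t * c * pw (u_ext (snd p)) (\<alpha> - 1)) - c"
    for p :: "real \<times> real"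
  have "\<Psi> (s, s) = 0"
    unfolding \<Psi>_def c_def using decay_identity[OF t u_ext_nonneg] by simp
  moreover have "continuous_on UNIV \<Psi>"
    unfolding \<Psi>_def using t alpha_ge_1
    by (intro continuous_intros continuous_on_stretch continuous_on_pw continuous_on_compose2[OF continuous_on_u_ext])
      (auto simp: u_ext_nonneg)
  ultimately obtain d where d: "d > 0" "\<And>p. dist p (s, s) < d \<Longrightarrow> \<bar>\<Psi> p\<bar> < e"
    using e unfolding continuous_on_iff by (metis UNIV_I dist_real_def diff_zero)
  show ?thesis
  proof (rule that[of "d / 2"])
    fix s1 s2 assume s12: "0 \<le> s1" "s1 < s2" "s1 \<le> s" "s \<le> s2" "s2 - s1 < d / 2"
    obtain \<sigma> where \<sigma>: "s1 < \<sigma>" "\<sigma> < s2" "mass0 s2 - mass0 s1 = u_ext \<sigma> * (s2 - s1)"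
      using mass0_mvt[OF s12(1,2)] .
    have "dist (\<sigma>, s2) (s, s) \<le> dist \<sigma> s + dist s2 s"
      by (simp add: dist_Pair_Pair sqrt_sum_squares_le_sum del: dist_real_def)
    also have "\<dots> < d" using \<sigma> s12 by (simp add: dist_real_def)
    finally have "\<bar>\<Psi> (\<sigma>, s2)\<bar> \<le> e" using d(2) by fastforce
    moreover have "(mass0 s2 - mass0 s1) * (stretch t (u_ext s2) - \<alpha> * t * c * pw (u_ext s2) (\<alpha> - 1))
        - c * (s2 - s1) = (s2 - s1) * \<Psi> (\<sigma>, s2)"
      unfolding \<Psi>_def \<sigma>(3) by (simp add: algebra_simps)
    ultimately show "\<bar>(mass0 s2 - mass0 s1) * (stretch t (u_ext s2) - \<alpha> * t * c * pw (u_ext s2) (\<alpha> - 1))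
        - c * (s2 - s1)\<bar> \<le> e * (s2 - s1)"
      using s12 by (simp add: abs_mult mult.commute mult_right_mono)
  qed (use d in simp)
qed

lemma char_mass_stretch_term:
  fixes s :: real
  assumes t: "0 \<le> t" and e: "e > 0"
  defines "c \<equiv> decay t (u_ext s)"
  obtains \<delta> where "\<delta> > 0" "\<And>s1 s2. s1 \<le> s \<Longrightarrow> s \<le> s2 \<Longrightarrow> s2 - s1 < \<delta> \<Longrightarrow>
      \<bar>stretch t (u_ext s2) - stretch t (u_ext s1) - \<alpha> * t * c * (pw (u_ext s2) (\<alpha> - 1) - pw (u_ext s1) (\<alpha> - 1))\<bar>
        \<le> e * (\<alpha> * t * (pw (u_ext s2) (\<alpha> - 1) - pw (u_ext s1) (\<alpha> - 1)))"
proof -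
  have "continuous_on UNIV (\<lambda>b. decay t (u_ext b))"
    using t by (intro continuous_on_decay continuous_on_u_ext continuous_intros) (auto simp: u_ext_nonneg)
  then obtain d where d: "d > 0" "\<And>b. dist b s < d \<Longrightarrow> \<bar>decay t (u_ext b) - c\<bar> < e"
    using e unfolding continuous_on_iff c_def by (metis UNIV_I dist_real_def)
  show ?thesis
  proof (rule that[of d])
    fix s1 s2 assume s12: "s1 \<le> s" "s \<le> s2" "s2 - s1 < d"
    let ?y1 = "pw (u_ext s1) (\<alpha> - 1)" and ?y2 = "pw (u_ext s2) (\<alpha> - 1)"
    have u12: "u_ext s1 \<le> u_ext s2" using u_ext_mono s12 by simp
    have y12: "?y1 \<le> ?y2"
      using pw_mono[OF alpha_ge_1 u_ext_nonneg u12] .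
    consider "\<alpha> = 1" | "u_ext s1 = u_ext s2" | "\<alpha> > 1" "u_ext s1 < u_ext s2"
      using alpha_ge_1 u12 by linarith
    then show "\<bar>stretch t (u_ext s2) - stretch t (u_ext s1) - \<alpha> * t * c * (?y2 - ?y1)\<bar>
        \<le> e * (\<alpha> * t * (?y2 - ?y1))"
    proof cases
      case 1
      show ?thesis by (simp only: stretch_alpha_1[OF 1 t]) (simp add: 1 pw_def)
    next
      case 2
      then show ?thesis using e by simp
    next
      case 3
      obtain z where z: "u_ext s1 < z" "z < u_ext s2"
        "stretch t (u_ext s2) - stretch t (u_ext s1) = \<alpha> * t * decay t z * (?y2 - ?y1)"
        using stretch_cauchy_mvt[OF 3(1) t u_ext_nonneg 3(2)] .
      obtain \<sigma> where \<sigma>: "s1 \<le> \<sigma>" "\<sigma> \<le> s2" "u_ext \<sigma> = z"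
        using IVT'[of u_ext s1 z s2] z s12 continuous_on_u_ext by fastforce
      have "dist \<sigma> s < d" using \<sigma> s12 by (simp add: dist_real_def)
      then have "\<bar>decay t z - c\<bar> \<le> e" using d(2) \<sigma>(3) by fastforce
      then have "\<bar>decay t z - c\<bar> * (\<alpha> * t * (?y2 - ?y1)) \<le> e * (\<alpha> * t * (?y2 - ?y1))"
        using t alpha_pos y12 by (intro mult_right_mono) auto
      moreover have "stretch t (u_ext s2) - stretch t (u_ext s1) - \<alpha> * t * c * (?y2 - ?y1)
          = (decay t z - c) * (\<alpha> * t * (?y2 - ?y1))"
        unfolding z(3) by (simp add: algebra_simps)
      ultimately show ?thesis
        using t alpha_pos y12 by (simp add: abs_mult)
    qed
  qed (use d in simp)
qed

lemma char_mass_increment_bound: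
  assumes t: "0 \<le> t" and s12: "0 \<le> s1" "s1 < s2" and e: "0 \<le> e"
    and X: "\<bar>(mass0 s2 - mass0 s1) * (stretch t (u_ext s2) - \<alpha> * t * c * pw (u_ext s2) (\<alpha> - 1))
        - c * (s2 - s1)\<bar> \<le> e * (s2 - s1)"
    and Y: "\<bar>stretch t (u_ext s2) - stretch t (u_ext s1) - \<alpha> * t * c * (pw (u_ext s2) (\<alpha> - 1) - pw (u_ext s1) (\<alpha> - 1))\<bar>
        \<le> e * (\<alpha> * t * (pw (u_ext s2) (\<alpha> - 1) - pw (u_ext s1) (\<alpha> - 1)))"
  shows "\<bar>char_mass t s2 - char_mass t s1 - c * (char_pos t s2 - char_pos t s1)\<bar>
      \<le> e * (char_pos t s2 - char_pos t s1)"
proof -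
  let ?m1 = "mass0 s1" and ?m2 = "mass0 s2"
  let ?y1 = "pw (u_ext s1) (\<alpha> - 1)" and ?y2 = "pw (u_ext s2) (\<alpha> - 1)"
  let ?X = "(?m2 - ?m1) * (stretch t (u_ext s2) - \<alpha> * t * c * ?y2) - c * (s2 - s1)"
  let ?Y = "stretch t (u_ext s2) - stretch t (u_ext s1) - \<alpha> * t * c * (?y2 - ?y1)"
  have m: "0 \<le> ?m1" "?m1 \<le> ?m2" using mass0_nonneg mass0_mono s12 by auto
  have y: "0 \<le> ?y1" "?y1 \<le> ?y2"
    using pw_nonneg pw_mono[OF alpha_ge_1 u_ext_nonneg u_ext_mono] s12 by auto
  have "?m1 * ?y2 \<le> ?m2 * ?y2" using m y by (intro mult_right_mono) auto
  then have "\<alpha> * t * (?m1 * (?y2 - ?y1)) \<le> \<alpha> * t * (?m2 * ?y2 - ?m1 * ?y1)"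
    using t alpha_pos by (intro mult_left_mono) (auto simp: right_diff_distrib)
  then have P12: "(s2 - s1) + \<alpha> * t * (?m1 * (?y2 - ?y1)) \<le> char_pos t s2 - char_pos t s1"
    unfolding char_pos_def char_speed_def by (simp add: algebra_simps)
  have "?m1 * \<bar>?Y\<bar> \<le> ?m1 * (e * (\<alpha> * t * (?y2 - ?y1)))"
    using Y m(1) by (rule mult_left_mono)
  then have mY: "\<bar>?m1 * ?Y\<bar> \<le> e * (\<alpha> * t * (?m1 * (?y2 - ?y1)))"
    by (simp only: abs_mult abs_of_nonneg[OF m(1)]) (simp add: algebra_simps)
  have "char_mass t s2 - char_mass t s1 - c * (char_pos t s2 - char_pos t s1) = ?X + ?m1 * ?Y"
    unfolding char_mass_def char_pos_def char_speed_def by (simp add: algebra_simps)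
  then have "\<bar>char_mass t s2 - char_mass t s1 - c * (char_pos t s2 - char_pos t s1)\<bar>
      \<le> e * ((s2 - s1) + \<alpha> * t * (?m1 * (?y2 - ?y1)))"
    using abs_triangle_ineq[of ?X "?m1 * ?Y"] X mY by (simp add: distrib_left)
  also have "\<dots> \<le> e * (char_pos t s2 - char_pos t s1)"
    using P12 e by (intro mult_left_mono) auto
  finally show ?thesis .
qed

lemma char_mass_increment_interval:
  fixes s :: real
  assumes t: "0 \<le> t" and e: "e > 0"
  defines "c \<equiv> decay t (u_ext s)"
  obtains \<delta> where "\<delta> > 0" "\<And>s1 s2. 0 \<le> s1 \<Longrightarrow> s1 < s2 \<Longrightarrow> s1 \<le> s \<Longrightarrow> s \<le> s2 \<Longrightarrow> s2 - s1 < \<delta> \<Longrightarrow>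
      \<bar>char_mass t s2 - char_mass t s1 - c * (char_pos t s2 - char_pos t s1)\<bar>
        \<le> e * (char_pos t s2 - char_pos t s1)"
proof -
  obtain \<delta>1 where \<delta>1: "\<delta>1 > 0" "\<And>s1 s2. 0 \<le> s1 \<Longrightarrow> s1 < s2 \<Longrightarrow> s1 \<le> s \<Longrightarrow> s \<le> s2 \<Longrightarrow> s2 - s1 < \<delta>1 \<Longrightarrow>
      \<bar>(mass0 s2 - mass0 s1) * (stretch t (u_ext s2) - \<alpha> * t * c * pw (u_ext s2) (\<alpha> - 1))
        - c * (s2 - s1)\<bar> \<le> e * (s2 - s1)"
    using char_mass_mass_term[OF t e, of s, folded c_def] by blast
  obtain \<delta>2 where \<delta>2: "\<delta>2 > 0" "\<And>s1 s2. s1 \<le> s \<Longrightarrow> s \<le> s2 \<Longrightarrow> s2 - s1 < \<delta>2 \<Longrightarrow>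
      \<bar>stretch t (u_ext s2) - stretch t (u_ext s1) - \<alpha> * t * c * (pw (u_ext s2) (\<alpha> - 1) - pw (u_ext s1) (\<alpha> - 1))\<bar>
        \<le> e * (\<alpha> * t * (pw (u_ext s2) (\<alpha> - 1) - pw (u_ext s1) (\<alpha> - 1)))"
    using char_mass_stretch_term[OF t e, of s, folded c_def] by blast
  show ?thesis
  proof (rule that[of "min \<delta>1 \<delta>2"])
    fix s1 s2 assume s12: "0 \<le> s1" "s1 < s2" "s1 \<le> s" "s \<le> s2" "s2 - s1 < min \<delta>1 \<delta>2"
    show "\<bar>char_mass t s2 - char_mass t s1 - c * (char_pos t s2 - char_pos t s1)\<bar>
        \<le> e * (char_pos t s2 - char_pos t s1)"
      using \<delta>1(2)[OF s12(1-4)] \<delta>2(2)[OF s12(3,4)] s12(5)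
      by (intro char_mass_increment_bound[OF t s12(1,2) less_imp_le[OF e]]) auto
  qed (use \<delta>1 \<delta>2 in simp)
qed

lemma char_mass_increment:
  assumes t: "0 \<le> t" and s: "0 \<le> s" and e: "e > 0"
  defines "c \<equiv> decay t (u_ext s)"
  obtains \<delta> where "\<delta> > 0" "\<And>s'. 0 \<le> s' \<Longrightarrow> \<bar>s' - s\<bar> < \<delta> \<Longrightarrow>
      \<bar>char_mass t s' - char_mass t s - c * (char_pos t s' - char_pos t s)\<bar>
        \<le> e * \<bar>char_pos t s' - char_pos t s\<bar>"
proof -
  obtain \<delta> where \<delta>: "\<delta> > 0" and interval: "\<And>s1 s2. 0 \<le> s1 \<Longrightarrow> s1 < s2 \<Longrightarrow> s1 \<le> s \<Longrightarrow> s \<le> s2 \<Longrightarrow> s2 - s1 < \<delta> \<Longrightarrow>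
      \<bar>char_mass t s2 - char_mass t s1 - c * (char_pos t s2 - char_pos t s1)\<bar>
        \<le> e * (char_pos t s2 - char_pos t s1)"
    using char_mass_increment_interval[OF t e, of s, folded c_def] by blast
  show ?thesis
  proof (rule that[of "\<delta>"])
    fix s' assume s': "0 \<le> s'" "\<bar>s' - s\<bar> < \<delta>"
    consider "s < s'" | "s' = s" | "s' < s" by linarith
    then show "\<bar>char_mass t s' - char_mass t s - c * (char_pos t s' - char_pos t s)\<bar>
        \<le> e * \<bar>char_pos t s' - char_pos t s\<bar>"
    proof cases
      case 1
      then show ?thesis using interval[of s s'] s s' char_pos_less_iff[OF t s s'(1)] by simp
    next
      case 3
      have "char_mass t s' - char_mass t s - c * (char_pos t s' - char_pos t s)
          = - (char_mass t s - char_mass t s' - c * (char_pos t s - char_pos t s'))"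
        by (simp add: algebra_simps)
      then show ?thesis using interval[of s' s] 3 s s' char_pos_less_iff[OF t s'(1) s]
        by (simp only: abs_minus_cancel) simp
    qed simp
  qed (use \<delta> in simp)
qed

lemma char_mass_foot_has_derivative:
  assumes t: "0 \<le> t" and \<rho>: "0 < \<rho>"
  shows "((\<lambda>r. char_mass t (char_foot t r)) has_real_derivative decay t (u_ext (char_foot t \<rho>))) (at \<rho>)"
  unfolding has_field_derivative_iff
proof (rule tendstoI)
  fix e :: real assume e: "0 < e"
  define s where "s = char_foot t \<rho>"
  have s: "0 \<le> s" using char_foot_nonneg t \<rho> s_def by simp
  obtain \<delta> where \<delta>: "\<delta> > 0" "\<And>s'. 0 \<le> s' \<Longrightarrow> \<bar>s' - s\<bar> < \<delta> \<Longrightarrow>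
      \<bar>char_mass t s' - char_mass t s - decay t (u_ext s) * (char_pos t s' - char_pos t s)\<bar>
        \<le> e / 2 * \<bar>char_pos t s' - char_pos t s\<bar>"
    using char_mass_increment[OF t s half_gt_zero[OF e]] by blast
  have "isCont (char_foot t) \<rho>"
    using continuous_on_interior[OF continuous_on_slice[OF continuous_on_char_foot]] t \<rho> by simp
  then have "eventually (\<lambda>r. dist (char_foot t r) s < \<delta>) (at \<rho>)"
    unfolding isCont_def s_def using \<delta>(1) by (rule tendstoD)
  moreover have "eventually (\<lambda>r. 0 < r \<and> r \<noteq> \<rho>) (at \<rho>)"
    unfolding eventually_at using \<rho> by (intro exI[of _ \<rho>]) (auto simp: dist_real_def)
  ultimately show "eventually (\<lambda>r. dist ((char_mass t (char_foot t r) - char_mass t (char_foot t \<rho>)) / (r - \<rho>))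
      (decay t (u_ext (char_foot t \<rho>))) < e) (at \<rho>)"
  proof eventually_elim
    case (elim r)
    have "0 \<le> char_foot t r" "char_pos t (char_foot t r) = r" "char_pos t s = \<rho>"
      using elim t \<rho> char_foot_nonneg char_pos_foot s_def by auto
    then have "\<bar>char_mass t (char_foot t r) - char_mass t s - decay t (u_ext s) * (r - \<rho>)\<bar> \<le> e / 2 * \<bar>r - \<rho>\<bar>"
      using \<delta>(2)[of "char_foot t r"] elim(1) by (simp add: dist_real_def)
    moreover have "(char_mass t (char_foot t r) - char_mass t s) / (r - \<rho>) - decay t (u_ext s)
        = (char_mass t (char_foot t r) - char_mass t s - decay t (u_ext s) * (r - \<rho>)) / (r - \<rho>)"
      using elim by (simp add: field_simps)
    ultimately have "\<bar>(char_mass t (char_foot t r) - char_mass t s) / (r - \<rho>) - decay t (u_ext s)\<bar> \<le> e / 2"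
      using elim by (simp add: abs_divide divide_le_eq)
    then show ?case using e unfolding s_def dist_real_def by linarith
  qed
qed

section \<open>The classical solution\<close>

definition u_sol :: "real \<Rightarrow> real \<Rightarrow> real" where
  "u_sol t \<rho> = decay t (u_ext (char_foot t \<rho>))"

definition m_sol :: "real \<Rightarrow> real \<Rightarrow> real" where
  "m_sol t \<rho> = integral {0..\<rho>} (u_sol t)"

lemma u_sol_nonneg: "0 \<le> t \<Longrightarrow> 0 \<le> u_sol t \<rho>"
  unfolding u_sol_def by (simp add: decay_nonneg u_ext_nonneg)

lemma continuous_on_u_sol: "continuous_on ({0..} \<times> {0..}) (\<lambda>(t, \<rho>). u_sol t \<rho>)"
proof -
  have "continuous_on ({0..} \<times> {0..}) (\<lambda>x. u_ext ((\<lambda>(t, \<rho>). char_foot t \<rho>) x))"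
    by (rule continuous_on_compose2[OF continuous_on_u_ext continuous_on_char_foot]) auto
  then show ?thesis
    unfolding u_sol_def case_prod_unfold
    by (intro continuous_on_decay continuous_intros) (auto simp: u_ext_nonneg)
qed

lemma continuous_on_char_mass_foot:
  "continuous_on ({0..} \<times> {0..}) (\<lambda>(t, \<rho>). char_mass t (char_foot t \<rho>))"
proof -
  have foot: "continuous_on ({0..} \<times> {0..}) (\<lambda>x. char_foot (fst x) (snd x))"
    using continuous_on_char_foot by (simp add: case_prod_unfold)
  have "continuous_on ({0..} \<times> {0..}) (\<lambda>x. mass0 (char_foot (fst x) (snd x)))"
    by (rule continuous_on_compose2[OF continuous_on_mass0 foot]) (auto simp: char_foot_nonneg)
  moreover have "continuous_on ({0..} \<times> {0..}) (\<lambda>x. u_ext (char_foot (fst x) (snd x)))"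
    by (rule continuous_on_compose2[OF continuous_on_u_ext foot]) auto
  ultimately show ?thesis
    unfolding char_mass_def case_prod_unfold
    by (intro continuous_intros continuous_on_stretch) (auto simp: u_ext_nonneg)
qed

lemma m_sol_eq_char_mass:
  assumes t: "0 \<le> t" and \<rho>: "0 \<le> \<rho>"
  shows "m_sol t \<rho> = char_mass t (char_foot t \<rho>)"
proof -
  have "(u_sol t has_integral (char_mass t (char_foot t \<rho>) - char_mass t (char_foot t 0))) {0..\<rho>}"
  proof (rule fundamental_theorem_of_calculus_interior[OF \<rho>])
    show "continuous_on {0..\<rho>} (\<lambda>r. char_mass t (char_foot t r))"
      using continuous_on_slice[OF continuous_on_char_mass_foot, of t] t
      by (auto intro: continuous_on_subset)
  next
    fix r assume "r \<in> {0<..<\<rho>}"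
    then show "((\<lambda>r. char_mass t (char_foot t r)) has_vector_derivative u_sol t r) (at r)"
      using char_mass_foot_has_derivative[OF t]
      by (simp add: u_sol_def has_real_derivative_iff_has_vector_derivative)
  qed
  moreover have "char_foot t 0 = 0"
    using char_foot_pos[OF t, of 0] by simp
  ultimately show ?thesis
    unfolding m_sol_def by (simp add: integral_unique char_mass_def)
qed

lemma continuous_on_m_sol: "continuous_on ({0..} \<times> {0..}) (\<lambda>(t, \<rho>). m_sol t \<rho>)"
  using continuous_on_char_mass_foot by (rule continuous_on_eq) (auto simp: m_sol_eq_char_mass)

lemma m_sol_has_derivative_space:
  assumes "0 \<le> t" "0 < \<rho>"
  shows "(m_sol t has_real_derivative u_sol t \<rho>) (at \<rho>)"
proof -
  have "((\<lambda>r. char_mass t (char_foot t r)) has_real_derivative u_sol t \<rho>) (at \<rho>)"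
    using char_mass_foot_has_derivative[OF assms] by (simp add: u_sol_def)
  then show ?thesis
    by (rule has_field_derivative_transform_within_open[where S = "{0<..}"])
      (use assms in \<open>auto simp: m_sol_eq_char_mass\<close>)
qed

lemma m_sol_mono:
  assumes t: "0 \<le> t" and ab: "0 \<le> a" "a \<le> b"
  shows "m_sol t a \<le> m_sol t b"
proof -
  have c: "continuous_on {0..} (u_sol t)"
    using continuous_on_slice[OF continuous_on_u_sol] t by simp
  have "u_sol t integrable_on {0..x}" for x
    by (rule integrable_continuous_interval[OF continuous_on_subset[OF c]]) auto
  then show ?thesis
    unfolding m_sol_def using ab by (intro integral_subset_le) (auto simp: u_sol_nonneg t)
qed

lemma m_sol_0 [simp]: "m_sol t 0 = 0"
  unfolding m_sol_def by simp

lemma m_sol_time_0: "0 \<le> \<rho> \<Longrightarrow> m_sol 0 \<rho> = mass0 \<rho>"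
  using m_sol_eq_char_mass[of 0 \<rho>] char_foot_pos[of 0 \<rho>] by (simp add: char_mass_def char_pos_def)

lemma m_sol_has_derivative_time:
  assumes t0: "0 < t0" and \<rho>0: "0 < \<rho>0"
  shows "((\<lambda>t. m_sol t \<rho>0) has_real_derivative - (u_sol t0 \<rho>0 powr \<alpha>) * m_sol t0 \<rho>0) (at t0)"
proof -
  define s0 where "s0 = char_foot t0 \<rho>0"
  define v where "v = u_ext s0"
  have s0: "0 \<le> s0" using char_foot_nonneg t0 \<rho>0 s0_def by simp
  have v: "0 \<le> v" using u_ext_nonneg v_def by simp
  txt \<open>Follow the characteristic through \<open>(t0, \<rho>0)\<close>: the mass to its left is explicit, and the
    mass between it and \<open>\<rho>0\<close> is controlled by the continuity of \<open>u_sol\<close>.\<close>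
  have split: "m_sol t \<rho>0 = char_mass t s0 - (m_sol t (char_pos t s0) - m_sol t \<rho>0)" if "t \<in> {0<..}" for t
    using that s0 char_pos_ge[of t s0] m_sol_eq_char_mass[of t "char_pos t s0"] char_foot_pos[of t s0]
    by simp
  have mass: "((\<lambda>t. char_mass t s0) has_real_derivative mass0 s0 * ((\<alpha> - 1) * pw v (\<alpha> - 1) * decay t0 v)) (at t0)"
    unfolding char_mass_def v_def[symmetric]
    using stretch_has_derivative_time[OF less_imp_le[OF t0] v] by (rule DERIV_cmult)
  have "((\<lambda>t. char_pos t s0) has_real_derivative \<alpha> * char_speed s0) (at t0)"
    unfolding char_pos_def by (auto intro!: derivative_eq_intros)
  moreover have "isCont (\<lambda>(t, \<rho>). u_sol t \<rho>) (t0, \<rho>0)"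
    using continuous_on_interior[OF continuous_on_u_sol] t0 \<rho>0 by (simp add: interior_Times)
  moreover have "\<And>t \<rho>. 0 < t \<Longrightarrow> 0 < \<rho> \<Longrightarrow> (m_sol t has_real_derivative u_sol t \<rho>) (at \<rho>)"
    using m_sol_has_derivative_space by simp
  moreover have "char_pos t0 s0 = \<rho>0"
    using char_pos_foot t0 \<rho>0 s0_def by simp
  ultimately have increment: "((\<lambda>t. m_sol t (char_pos t s0) - m_sol t \<rho>0) has_real_derivative
      u_sol t0 \<rho>0 * (\<alpha> * char_speed s0)) (at t0)"
    using DERIV_increment_along_curve[OF _ _ _ _ t0 \<rho>0] by blast
  have "mass0 s0 * ((\<alpha> - 1) * pw v (\<alpha> - 1) * decay t0 v) - u_sol t0 \<rho>0 * (\<alpha> * char_speed s0)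
      = - (decay t0 v powr \<alpha> * stretch t0 v) * mass0 s0"
    unfolding decay_powr_mult_stretch[OF less_imp_le[OF t0] v] u_sol_def char_speed_def
      s0_def[symmetric] v_def[symmetric] by (simp add: algebra_simps)
  also have "\<dots> = - (u_sol t0 \<rho>0 powr \<alpha>) * m_sol t0 \<rho>0"
    using m_sol_eq_char_mass[of t0 \<rho>0] t0 \<rho>0
    by (simp add: u_sol_def char_mass_def s0_def[symmetric] v_def[symmetric])
  finally have "((\<lambda>t. char_mass t s0 - (m_sol t (char_pos t s0) - m_sol t \<rho>0)) has_real_derivative
      - (u_sol t0 \<rho>0 powr \<alpha>) * m_sol t0 \<rho>0) (at t0)"
    using DERIV_diff[OF mass increment] by simp
  then show ?thesis
    by (rule has_field_derivative_transform_within_open[where S = "{0<..}"]) (use t0 split in auto)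
qed

lemma m_sol_has_derivative:
  assumes t0: "0 < t0" and \<rho>0: "0 < \<rho>0"
  shows "((\<lambda>x. m_sol (fst x) (snd x)) has_derivative
     (\<lambda>h. (- (u_sol t0 \<rho>0 powr \<alpha>) * m_sol t0 \<rho>0) * fst h + u_sol t0 \<rho>0 * snd h)) (at (t0, \<rho>0))"
proof -
  define X :: "real set" where "X = {0<..}"
  have dt: "((\<lambda>t. m_sol t \<rho>0) has_derivative (*) (- (u_sol t0 \<rho>0 powr \<alpha>) * m_sol t0 \<rho>0)) (at t0 within X)"
    using m_sol_has_derivative_time[OF t0 \<rho>0] by (simp add: has_field_derivative_def has_derivative_at_withinI)
  have d\<rho>: "((\<lambda>y. m_sol x y) has_derivative blinfun_apply (blinfun_mult_right (u_sol x y))) (at y within X)"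
    if "x \<in> X" "y \<in> X" for x y
    using m_sol_has_derivative_space[of x y] that unfolding X_def
    by (simp add: has_field_derivative_def has_derivative_at_withinI)
  have "continuous_on (X \<times> X) (\<lambda>p. blinfun_mult_right ((\<lambda>(t, \<rho>). u_sol t \<rho>) p))"
    by (rule linear_continuous_on_compose[OF continuous_on_subset[OF continuous_on_u_sol]])
      (auto simp: X_def bounded_linear.linear[OF bounded_linear_blinfun_mult_right])
  then have cont: "continuous (at (t0, \<rho>0) within X \<times> X) (\<lambda>(x, y). blinfun_mult_right (u_sol x y))"
    using t0 \<rho>0 unfolding X_def by (auto simp: continuous_on_eq_continuous_within case_prod_unfold)
  have "((\<lambda>(x, y). m_sol x y) has_derivative (\<lambda>(tx, ty). (- (u_sol t0 \<rho>0 powr \<alpha>) * m_sol t0 \<rho>0) * tx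
      + blinfun_apply (blinfun_mult_right (u_sol t0 \<rho>0)) ty)) (at (t0, \<rho>0) within X \<times> X)"
    by (rule has_derivative_partialsI[OF dt d\<rho> cont]) (use \<rho>0 in \<open>auto simp: X_def\<close>)
  moreover have "at (t0, \<rho>0) within X \<times> X = at (t0, \<rho>0)"
    by (rule at_within_open) (use t0 \<rho>0 in \<open>auto simp: X_def intro: open_Times\<close>)
  ultimately show ?thesis by (simp add: case_prod_unfold)
qed

lemma visc_sol_min_m_sol:
  assumes c: "0 \<le> c"
    and m: "\<And>t \<rho>. 0 \<le> t \<Longrightarrow> 0 \<le> \<rho> \<Longrightarrow> m (t, \<rho>) = min (m_sol t \<rho>) c"
    and m0: "\<And>\<rho>. 0 \<le> \<rho> \<Longrightarrow> m0 \<rho> = min (mass0 \<rho>) c"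
  shows "visc_sol \<alpha> m0 m"
proof -
  have "continuous_on ({0..} \<times> {0..}) (\<lambda>x. min ((\<lambda>(t, \<rho>). m_sol t \<rho>) x) c)"
    by (intro continuous_intros continuous_on_m_sol)
  then have cont: "continuous_on ({0..} \<times> {0..}) m"
    by (rule continuous_on_eq) (auto simp: m)
  have interior: "(\<forall>p\<in>frechet_superdiff m (t, \<rho>). fst p + (max (snd p) 0) powr \<alpha> * m (t, \<rho>) \<le> 0) \<and>
      (\<forall>p\<in>frechet_subdiff m (t, \<rho>). fst p + (max (snd p) 0) powr \<alpha> * m (t, \<rho>) \<ge> 0)"
    if t: "0 < t" and \<rho>: "0 < \<rho>" for t \<rho>
  proof -
    have "eventually (\<lambda>y. y \<in> {0<..} \<times> {0<..}) (nhds (t, \<rho>))"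
      using t \<rho> by (intro eventually_nhds_in_open open_Times) auto
    then have near: "eventually (\<lambda>y. m y = min (m_sol (fst y) (snd y)) c) (nhds (t, \<rho>))"
      by eventually_elim (auto simp: m)
    have "- (u_sol t \<rho> powr \<alpha>) * m_sol t \<rho> = - (u_sol t \<rho> powr \<alpha>) * (\<lambda>x. m_sol (fst x) (snd x)) (t, \<rho>)"
      by simp
    note classical = m_sol_has_derivative[OF t \<rho>] near this u_sol_nonneg[OF less_imp_le[OF t]]
    show ?thesis
      using superdiff_min_classical_solution[OF classical c alpha_ge_1]
        subdiff_min_classical_solution[OF classical alpha_ge_1] by auto
  qed
  show ?thesis
    unfolding visc_sol_def visc_subsol_def visc_supersol_def
    using cont interior m m0 m_sol_time_0 c by auto
qed

lemma integral_truncated_ut0: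
  assumes "0 \<le> \<rho>"
  shows "integral {0..\<rho>} (\<lambda>\<sigma>. if \<sigma> < S0 then ut0 \<sigma> else 0) = mass0 (min \<rho> S0)"
proof -
  have "integral {0..\<rho>} (\<lambda>\<sigma>. if \<sigma> < S0 then ut0 \<sigma> else 0)
      = integral {0..\<rho>} (\<lambda>\<sigma>. if \<sigma> \<in> {0..S0} then u_ext \<sigma> else 0)"
    by (rule integral_spike[of "{S0}"]) (auto simp: u_ext_eq)
  also have "\<dots> = integral ({0..S0} \<inter> {0..\<rho>}) u_ext"
    by (rule integral_restrict_Int)
  also have "{0..S0} \<inter> {0..\<rho>} = {0..min \<rho> S0}" by auto
  finally show ?thesis unfolding mass0_def .
qed

definition u_trunc :: "real \<Rightarrow> real \<Rightarrow> real" where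
  "u_trunc t \<rho> = (if \<rho> \<le> char_pos t S0 then u_sol t \<rho> else 0)"

lemma u_trunc_le: assumes t: "0 \<le> t" and \<rho>: "0 \<le> \<rho>" shows "0 \<le> u_trunc t \<rho>" "u_trunc t \<rho> \<le> u_ext S0"
proof -
  show "0 \<le> u_trunc t \<rho>" unfolding u_trunc_def using u_sol_nonneg[OF t] by simp
  have "u_sol t \<rho> \<le> u_ext S0" if "\<rho> \<le> char_pos t S0"
  proof -
    have "char_foot t \<rho> \<le> S0" using char_foot_le_iff t \<rho> that S0_pos by simp
    then have "u_ext (char_foot t \<rho>) \<le> u_ext S0" by (rule u_ext_mono)
    then show ?thesis
      unfolding u_sol_def using decay_le[OF t u_ext_nonneg] by (rule order_trans[rotated])
  qed
  then show "u_trunc t \<rho> \<le> u_ext S0"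
    unfolding u_trunc_def using u_ext_nonneg by simp
qed

lemma u_trunc_eq_explicit:
  assumes t: "0 \<le> t" and \<rho>: "0 \<le> \<rho>" and Q: "\<And>x. x \<in> {0..S0} \<Longrightarrow> Q x = char_pos t x"
  shows "(if \<rho> \<le> char_pos t S0 \<and> ut0 (the_inv_into {0..S0} Q \<rho>) > 0
      then (ut0 (the_inv_into {0..S0} Q \<rho>) powr (- \<alpha>) + \<alpha> * t) powr (- 1 / \<alpha>) else 0) = u_trunc t \<rho>"
proof (cases "\<rho> \<le> char_pos t S0")
  case True
  define q where "q = char_foot t \<rho>"
  have q: "q \<in> {0..S0}"
    using char_foot_nonneg char_foot_le_iff t \<rho> True S0_pos q_def by auto
  have "inj_on (char_pos t) {0..S0}"
    using inj_on_subset[OF bij_betw_imp_inj_on[OF char_pos_bij[OF t]]] by auto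
  then have "inj_on Q {0..S0}"
    using inj_on_cong[of "{0..S0}" Q "char_pos t"] Q by simp
  then have "the_inv_into {0..S0} Q \<rho> = q"
    by (rule the_inv_into_f_eq) (use Q q char_pos_foot[OF t \<rho>] q_def in auto)
  then show ?thesis
    using True decay_eq_powr[OF _ t, of "ut0 q"] u_ext_eq[OF q] u_ext_nonneg[of q]
    by (auto simp: u_trunc_def u_sol_def q_def[symmetric])
qed (simp add: u_trunc_def)

end

section \<open>The free boundary\<close>

locale mass_problem_front = mass_problem +
  fixes S :: "real \<Rightarrow> real"
  assumes S_0: "S 0 = S0"
    and S_ode: "\<And>t. 0 \<le> t \<Longrightarrow> (S has_real_derivative mass0 S0 * pw (u_trunc t (S t)) (\<alpha> - 1)) (at t within {0..})"
begin

lemma continuous_on_S: "continuous_on {0..} S"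
  unfolding continuous_on_eq_continuous_within using S_ode by (auto intro: DERIV_continuous)

lemma S_has_derivative: "0 < t \<Longrightarrow> (S has_real_derivative mass0 S0 * pw (u_trunc t (S t)) (\<alpha> - 1)) (at t)"
  using S_ode[of t] at_within_interior[of t "{0..}"] by simp

lemma S0_le_S: assumes "0 \<le> t" shows "S0 \<le> S t"
proof -
  have "S 0 \<le> S t"
  proof (rule DERIV_nonneg_imp_increasing_open[OF assms])
    show "continuous_on {0..t} S" using continuous_on_subset[OF continuous_on_S] by auto
    fix x :: real assume x: "0 < x"
    show "\<exists>y. (S has_real_derivative y) (at x) \<and> 0 \<le> y"
      using S_has_derivative[OF x] mass0_nonneg[of S0] S0_pos pw_nonneg by auto
  qed
  then show ?thesis using S_0 by simp
qed

lemma S_le_char_pos: assumes "0 \<le> t" shows "S t \<le> char_pos t S0"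
proof -
  have "char_pos 0 S0 - S 0 \<le> char_pos t S0 - S t"
  proof (rule DERIV_nonneg_imp_increasing_open[OF assms])
    show "continuous_on {0..t} (\<lambda>t. char_pos t S0 - S t)"
      unfolding char_pos_def using continuous_on_subset[OF continuous_on_S]
      by (intro continuous_intros) auto
    fix x :: real assume x: "0 < x"
    have u: "0 \<le> u_trunc x (S x)" "u_trunc x (S x) \<le> u_ext S0"
      using u_trunc_le[of x "S x"] x S0_le_S[of x] S0_pos by auto
    have "mass0 S0 * pw (u_trunc x (S x)) (\<alpha> - 1) \<le> char_speed S0"
      unfolding char_speed_def using pw_mono[OF alpha_ge_1 u] mass0_nonneg[of S0] S0_pos
      by (simp add: mult_left_mono)
    also have "\<dots> \<le> \<alpha> * char_speed S0"
      using char_speed_nonneg[of S0] S0_pos alpha_ge_1 by (simp add: mult_le_cancel_right1)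
    finally have "0 \<le> \<alpha> * char_speed S0 - mass0 S0 * pw (u_trunc x (S x)) (\<alpha> - 1)" by simp
    moreover have "((\<lambda>t. char_pos t S0 - S t) has_real_derivative
        \<alpha> * char_speed S0 - mass0 S0 * pw (u_trunc x (S x)) (\<alpha> - 1)) (at x)"
      unfolding char_pos_def using S_has_derivative[OF x] by (auto intro!: derivative_eq_intros)
    ultimately show "\<exists>y. ((\<lambda>t. char_pos t S0 - S t) has_real_derivative y) (at x) \<and> 0 \<le> y" by blast
  qed
  then show ?thesis using S_0 by (simp add: char_pos_def char_speed_def)
qed

lemma u_trunc_front: "0 \<le> t \<Longrightarrow> u_trunc t (S t) = u_sol t (S t)"
  using S_le_char_pos unfolding u_trunc_def by simp

lemma m_sol_front_has_derivative:
  assumes t: "0 < t"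
  shows "((\<lambda>t. m_sol t (S t)) has_real_derivative
     u_sol t (S t) powr \<alpha> * (mass0 S0 - m_sol t (S t))) (at t)"
proof -
  define u where "u = u_sol t (S t)"
  have u: "0 \<le> u" using u_sol_nonneg t u_def by simp
  have "((\<lambda>t. (t, S t)) has_derivative (\<lambda>h. (h, mass0 S0 * pw u (\<alpha> - 1) * h))) (at t)"
    using S_has_derivative[OF t] u_trunc_front[of t] t unfolding u_def
    by (intro has_derivative_Pair has_derivative_ident) (simp add: has_field_derivative_def mult_commute_abs)
  from diff_chain_at[OF this m_sol_has_derivative[OF t, of "S t"]]
  have "((\<lambda>t. m_sol t (S t)) has_derivative
      (\<lambda>h. - (u powr \<alpha>) * m_sol t (S t) * h + u * (mass0 S0 * pw u (\<alpha> - 1) * h))) (at t)"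
    using t S0_le_S[of t] S0_pos unfolding u_def by (simp add: o_def)
  moreover have "(\<lambda>h. - (u powr \<alpha>) * m_sol t (S t) * h + u * (mass0 S0 * pw u (\<alpha> - 1) * h))
      = (*) (u powr \<alpha> * (mass0 S0 - m_sol t (S t)))"
    using mult_pw_eq_powr[OF u] by (auto simp: algebra_simps)
  ultimately show ?thesis
    unfolding u_def has_field_derivative_def by simp
qed

lemma mass_conservation: assumes "0 \<le> t" shows "m_sol t (S t) = mass0 S0"
proof -
  define e where "e t = (m_sol t (S t) - mass0 S0)\<^sup>2" for t
  have "e t \<le> e 0"
  proof (rule DERIV_nonpos_imp_decreasing_open[OF assms])
    have c: "continuous_on {0..t} (\<lambda>t. (t, S t))"
      using continuous_on_subset[OF continuous_on_S] by (intro continuous_intros) auto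
    have "(\<lambda>t. (t, S t)) ` {0..t} \<subseteq> {0..} \<times> {0..}"
      using S0_le_S S0_pos by fastforce
    from continuous_on_compose2[OF continuous_on_m_sol c this]
    show "continuous_on {0..t} e"
      unfolding e_def by (intro continuous_intros) simp
    fix x :: real assume x: "0 < x"
    define D where "D = u_sol x (S x) powr \<alpha> * (mass0 S0 - m_sol x (S x))"
    have "(e has_real_derivative 2 * (m_sol x (S x) - mass0 S0) * D) (at x)"
      unfolding e_def D_def
      by (rule derivative_eq_intros refl m_sol_front_has_derivative[OF x] | simp)+
    moreover have "2 * (m_sol x (S x) - mass0 S0) * D = - (2 * u_sol x (S x) powr \<alpha> * e x)"
      unfolding D_def e_def by (simp add: power2_eq_square algebra_simps)
    moreover have "0 \<le> 2 * u_sol x (S x) powr \<alpha> * e x"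
      unfolding e_def by simp
    ultimately show "\<exists>y. (e has_real_derivative y) (at x) \<and> y \<le> 0"
      by (intro exI[of _ "2 * (m_sol x (S x) - mass0 S0) * D"] conjI) simp_all
  qed
  moreover have "e 0 = 0"
    unfolding e_def using m_sol_time_0[of S0] S0_pos S_0 by simp
  ultimately have "e t = 0"
    using zero_le_power2[of "m_sol t (S t) - mass0 S0"] unfolding e_def by linarith
  then show ?thesis
    unfolding e_def by simp
qed

lemma integral_front_truncation:
  assumes t: "0 \<le> t" and \<rho>: "0 \<le> \<rho>"
  shows "integral {0..\<rho>} (\<lambda>\<sigma>. if \<sigma> < S t then u_trunc t \<sigma> else 0) = min (m_sol t \<rho>) (mass0 S0)"
proof -
  have "integral {0..\<rho>} (\<lambda>\<sigma>. if \<sigma> < S t then u_trunc t \<sigma> else 0)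
      = integral {0..\<rho>} (\<lambda>\<sigma>. if \<sigma> \<in> {0..S t} then u_sol t \<sigma> else 0)"
    using S_le_char_pos[OF t] by (intro integral_spike[of "{S t}"]) (auto simp: u_trunc_def)
  also have "\<dots> = m_sol t (min \<rho> (S t))"
    unfolding integral_restrict_Int m_sol_def by (simp add: Int_atLeastAtMost min.commute)
  also have "\<dots> = min (m_sol t \<rho>) (mass0 S0)"
  proof (cases "\<rho> \<le> S t")
    case True
    then show ?thesis
      using m_sol_mono[OF t \<rho> True] mass_conservation[OF t] by (simp add: min_def)
  next
    case False
    have "0 \<le> S t" using S0_le_S[OF t] S0_pos by simp
    then show ?thesis
      using m_sol_mono[OF t _, of "S t" \<rho>] False mass_conservation[OF t] by (simp add: min_def)
  qed
  finally show ?thesis .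
qed

end

theorem mainTheorem6:
  fixes \<alpha> S0 :: real and ut0 :: "real \<Rightarrow> real" and S :: "real \<Rightarrow> real"
  assumes h\<alpha>: "\<alpha> \<ge> 1"
    and hS0: "S0 > 0"
    and hcont: "continuous_on {0..S0} ut0"
    and hmono: "mono_on {0..S0} ut0"
    and hnonneg: "\<forall>\<rho>\<in>{0..S0}. ut0 \<rho> \<ge> 0"
    and hpos: "ut0 S0 > 0"
  defines "u0 \<equiv> (\<lambda>\<rho>. if \<rho> < S0 then ut0 \<rho> else 0)"
  defines "m0 \<equiv> (\<lambda>\<rho>. integral {0..\<rho>} u0)"
  defines "M \<equiv> m0 S0"
  defines "P \<equiv> (\<lambda>t \<rho>0. \<rho>0 + \<alpha> * m0 \<rho>0 * pw (ut0 \<rho>0) (\<alpha> - 1) * t)"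
  defines "Sbar \<equiv> (\<lambda>t. S0 + \<alpha> * M * pw (ut0 S0) (\<alpha> - 1) * t)"
  defines "ut \<equiv> (\<lambda>t \<rho>. if \<rho> \<le> Sbar t \<and> ut0 (the_inv_into {0..S0} (P t) \<rho>) > 0
                 then (ut0 (the_inv_into {0..S0} (P t) \<rho>) powr (- \<alpha>) + \<alpha> * t) powr (- 1 / \<alpha>)
                 else 0)"
  assumes hSinit: "S 0 = S0"
    and hSode: "\<forall>t\<ge>0. (S has_real_derivative (M * pw (ut t (S t)) (\<alpha> - 1))) (at t within {0..})"
  defines "u \<equiv> (\<lambda>t \<rho>. if \<rho> < S t then ut t \<rho> else 0)"
  defines "m \<equiv> (\<lambda>(t, \<rho>). integral {0..\<rho>} (u t))"
  shows "(\<forall>t\<ge>0. S t \<le> Sbar t) \<and> visc_sol \<alpha> m0 m"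
proof -
  interpret mass_problem \<alpha> S0 ut0
    using h\<alpha> hS0 hcont hmono hnonneg by unfold_locales auto
  have m0: "m0 \<rho> = mass0 (min \<rho> S0)" if "0 \<le> \<rho>" for \<rho>
    unfolding m0_def u0_def using integral_truncated_ut0[OF that] .
  have M: "M = mass0 S0" using m0[of S0] hS0 by (simp add: M_def)
  have P: "P t x = char_pos t x" if "x \<in> {0..S0}" for t x
    using m0[of x] that u_ext_eq[OF that] by (simp add: P_def char_pos_def char_speed_def)
  have Sbar: "Sbar t = char_pos t S0" for t
    using P[of S0 t] hS0 by (simp add: Sbar_def P_def M_def)
  have ut: "ut t \<rho> = u_trunc t \<rho>" if "0 \<le> t" "0 \<le> \<rho>" for t \<rho>
    unfolding ut_def Sbar using u_trunc_eq_explicit[OF that, of "P t"] P by simp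
  have "S 0 \<le> S t" if "0 \<le> t" for t
    using DERIV_within_nonneg_imp_le[of S "\<lambda>t. M * pw (ut t (S t)) (\<alpha> - 1)", OF _ _ that]
      hSode mass0_nonneg[of S0] hS0 pw_nonneg by (simp add: M)
  then have S_pos: "0 \<le> S t" if "0 \<le> t" for t
    using that hSinit hS0 by fastforce
  interpret mass_problem_front \<alpha> S0 ut0 S
    using hSinit hSode ut S_pos by unfold_locales (auto simp: M)
  have m_eq: "m (t, \<rho>) = min (m_sol t \<rho>) (mass0 S0)" if "0 \<le> t" "0 \<le> \<rho>" for t \<rho>
  proof -
    have "integral {0..\<rho>} (u t) = integral {0..\<rho>} (\<lambda>\<sigma>. if \<sigma> < S t then u_trunc t \<sigma> else 0)"
      unfolding u_def using that by (intro integral_cong) (auto simp: ut)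
    then show ?thesis using integral_front_truncation[OF that] by (simp add: m_def)
  qed
  have "visc_sol \<alpha> m0 m"
    using hS0 by (intro visc_sol_min_m_sol[OF mass0_nonneg m_eq]) (auto simp: m0 mass0_min)
  then show ?thesis
    using S_le_char_pos Sbar by simp
qed

end
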